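(* Let $f:E_A^{\mathbb N}\to\mathbb R$ be summable, strongly regular and Hölder-type with $P(f)=0$, and let $s=x+iy$ with $x\in\Gamma$. Then the operator $\mathcal L_s$ acting on $C^{0,\alpha}$ has at most finitely many eigenvalues of modulus $e^{P(x)}$, and each of them has algebraic multiplicity one.
   Context: $E$ countable, $A:E\times E\to\{0,1\}$, $E_A^{\mathbb N}$ the admissible one-sided sequences, $E_A^n$ admissible words of length $n$; the subshift is finitely irreducible (a finite set $\Omega$ of words exists such that for all $e,e'\in E$ some $\omega\in\Omega$ makes $e\omega e'$ admissible). $\sigma$ shift, $S_nf=\sum_{j<n}f\circ\sigma^j$, $[\omega]$ cylinders, $|\rho\wedge\rho'|$ common-prefix length. Fix $\alpha>0$; $V_\alpha(g)=\sup_{n\ge1}\sup\{|g(\rho)-g(\rho')|e^{\alpha(n-1)}:|\rho\wedge\rho'|\ge n\}$; Hölder-type means $V_\alpha<\infty$; $C^{0,\alpha}$ is the Banach space of bounded complex $g$ with $V_\alpha(g)<\infty$, norm $\|g\|_\infty+V_\alpha(g)$. Real $g$ summable: $\sum_e\exp(\sup_{[e]}g)<\infty$. $P(g)=\lim_n\frac1n\log\sum_{\omega\in E_A^n}\exp(\sup_{[\omega]}S_ng)$, $\Gamma=\{x:xf\text{ summable}\}$, $P(x)=P(xf)$. Strongly regular: $P(x)=0$ for some $x>0$ and $0<P(x)<\infty$ for some $x>0$. $\mathcal L_sg(\rho)=\sum_{e:A_{e\rho_1}=1}\exp(sf(e\rho))g(e\rho)$. *)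

theory Defs
  imports "HOL-Analysis.Analysis"
begin

text \<open>Symbolic dynamics over a countable alphabet, given by the type 'e::countable.
  Indices of sequences start at 0 (so the paper's rho_1 is rho 0).\<close>

definition admissible_seqs :: "('e \<Rightarrow> 'e \<Rightarrow> bool) \<Rightarrow> (nat \<Rightarrow> 'e) set" where
  "admissible_seqs A = {\<rho>. \<forall>n. A (\<rho> n) (\<rho> (Suc n))}"

definition admissible_word :: "('e \<Rightarrow> 'e \<Rightarrow> bool) \<Rightarrow> 'e list \<Rightarrow> bool" where
  "admissible_word A w \<longleftrightarrow> (\<forall>i. Suc i < length w \<longrightarrow> A (w ! i) (w ! Suc i))"

definition adm_words :: "('e \<Rightarrow> 'e \<Rightarrow> bool) \<Rightarrow> nat \<Rightarrow> 'e list set" where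
  "adm_words A n = {w. length w = n \<and> admissible_word A w}"

definition finitely_irreducible :: "('e \<Rightarrow> 'e \<Rightarrow> bool) \<Rightarrow> bool" where
  "finitely_irreducible A \<longleftrightarrow>
     (\<exists>\<Omega>. finite \<Omega> \<and> (\<forall>w\<in>\<Omega>. admissible_word A w) \<and>
       (\<forall>e e'. \<exists>w\<in>\<Omega>. admissible_word A (e # w @ [e'])))"

definition cylinder :: "('e \<Rightarrow> 'e \<Rightarrow> bool) \<Rightarrow> 'e list \<Rightarrow> (nat \<Rightarrow> 'e) set" where
  "cylinder A w = {\<rho>\<in>admissible_seqs A. \<forall>i<length w. \<rho> i = w ! i}"

definition shift :: "(nat \<Rightarrow> 'e) \<Rightarrow> (nat \<Rightarrow> 'e)" where
  "shift \<rho> = (\<lambda>i. \<rho> (Suc i))"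

definition birkhoff_sum :: "nat \<Rightarrow> ((nat \<Rightarrow> 'e) \<Rightarrow> real) \<Rightarrow> (nat \<Rightarrow> 'e) \<Rightarrow> real" where
  "birkhoff_sum n g \<rho> = (\<Sum>j<n. g ((shift ^^ j) \<rho>))"

definition holder_type :: "('e \<Rightarrow> 'e \<Rightarrow> bool) \<Rightarrow> real \<Rightarrow> ((nat \<Rightarrow> 'e) \<Rightarrow> 'a::real_normed_vector) \<Rightarrow> bool" where
  "holder_type A \<alpha> g \<longleftrightarrow>
     (\<exists>C. \<forall>n\<ge>1. \<forall>\<rho>\<in>admissible_seqs A. \<forall>\<rho>'\<in>admissible_seqs A.
        (\<forall>i<n. \<rho> i = \<rho>' i) \<longrightarrow> norm (g \<rho> - g \<rho>') * exp (\<alpha> * (real n - 1)) \<le> C)"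

text \<open>Summability: sum over e of exp(sup over [e] of g) is finite (empty cylinders
  contribute nothing; an unbounded-above cylinder would contribute +infinity).\<close>
definition summable_pot :: "('e \<Rightarrow> 'e \<Rightarrow> bool) \<Rightarrow> ((nat \<Rightarrow> 'e) \<Rightarrow> real) \<Rightarrow> bool" where
  "summable_pot A g \<longleftrightarrow>
     (\<forall>e. bdd_above (g ` cylinder A [e])) \<and>
     (\<lambda>e. exp (Sup (g ` cylinder A [e]))) summable_on {e. cylinder A [e] \<noteq> {}}"

definition pressure_finite_at :: "('e \<Rightarrow> 'e \<Rightarrow> bool) \<Rightarrow> ((nat \<Rightarrow> 'e) \<Rightarrow> real) \<Rightarrow> nat \<Rightarrow> bool" where
  "pressure_finite_at A g n \<longleftrightarrow>
     (\<forall>w\<in>adm_words A n. bdd_above (birkhoff_sum n g ` cylinder A w)) \<and>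
     (\<lambda>w. exp (Sup (birkhoff_sum n g ` cylinder A w))) summable_on
        {w\<in>adm_words A n. cylinder A w \<noteq> {}}"

definition pressure :: "('e \<Rightarrow> 'e \<Rightarrow> bool) \<Rightarrow> ((nat \<Rightarrow> 'e) \<Rightarrow> real) \<Rightarrow> ereal" where
  "pressure A g =
     (if \<forall>n\<ge>1. pressure_finite_at A g n then
        lim (\<lambda>n. ereal (ln (\<Sum>\<^sub>\<infinity>w\<in>{w\<in>adm_words A n. cylinder A w \<noteq> {}}.
                     exp (Sup (birkhoff_sum n g ` cylinder A w))) / real n))
      else \<infinity>)"

definition Gamma_set :: "('e \<Rightarrow> 'e \<Rightarrow> bool) \<Rightarrow> ((nat \<Rightarrow> 'e) \<Rightarrow> real) \<Rightarrow> real set" where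
  "Gamma_set A f = {x. summable_pot A (\<lambda>\<rho>. x * f \<rho>)}"

definition strongly_regular :: "('e \<Rightarrow> 'e \<Rightarrow> bool) \<Rightarrow> ((nat \<Rightarrow> 'e) \<Rightarrow> real) \<Rightarrow> bool" where
  "strongly_regular A f \<longleftrightarrow>
     (\<exists>x>0. pressure A (\<lambda>\<rho>. x * f \<rho>) = 0) \<and>
     (\<exists>x>0. 0 < pressure A (\<lambda>\<rho>. x * f \<rho>) \<and> pressure A (\<lambda>\<rho>. x * f \<rho>) < \<infinity>)"

text \<open>The Banach space C^{0,alpha}: bounded complex functions on the admissible
  sequences with finite V_alpha.  Functions are represented extensionally,
  i.e. they vanish outside the shift space.\<close>
definition holder_space :: "('e \<Rightarrow> 'e \<Rightarrow> bool) \<Rightarrow> real \<Rightarrow> ((nat \<Rightarrow> 'e) \<Rightarrow> complex) set" where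
  "holder_space A \<alpha> =
     {g. (\<forall>\<rho>. \<rho> \<notin> admissible_seqs A \<longrightarrow> g \<rho> = 0) \<and>
         bounded (g ` admissible_seqs A) \<and> holder_type A \<alpha> g}"

definition seq_cons :: "'e \<Rightarrow> (nat \<Rightarrow> 'e) \<Rightarrow> (nat \<Rightarrow> 'e)" where
  "seq_cons e \<rho> = case_nat e \<rho>"

definition transfer_op :: "('e \<Rightarrow> 'e \<Rightarrow> bool) \<Rightarrow> ((nat \<Rightarrow> 'e) \<Rightarrow> real) \<Rightarrow> complex
      \<Rightarrow> ((nat \<Rightarrow> 'e) \<Rightarrow> complex) \<Rightarrow> ((nat \<Rightarrow> 'e) \<Rightarrow> complex)" where
  "transfer_op A f s g \<rho> =
     (if \<rho> \<in> admissible_seqs A then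
        (\<Sum>\<^sub>\<infinity>e\<in>{e. A e (\<rho> 0)}. exp (s * complex_of_real (f (seq_cons e \<rho>))) * g (seq_cons e \<rho>))
      else 0)"

definition op_minus_scalar :: "('e \<Rightarrow> 'e \<Rightarrow> bool) \<Rightarrow> (((nat \<Rightarrow> 'e) \<Rightarrow> complex) \<Rightarrow> ((nat \<Rightarrow> 'e) \<Rightarrow> complex))
      \<Rightarrow> complex \<Rightarrow> ((nat \<Rightarrow> 'e) \<Rightarrow> complex) \<Rightarrow> ((nat \<Rightarrow> 'e) \<Rightarrow> complex)" where
  "op_minus_scalar A L \<mu> g = (\<lambda>\<rho>. if \<rho> \<in> admissible_seqs A then L g \<rho> - \<mu> * g \<rho> else 0)"

definition is_eigenvalue_on :: "((nat \<Rightarrow> 'e) \<Rightarrow> complex) set \<Rightarrow> ('e \<Rightarrow> 'e \<Rightarrow> bool)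
      \<Rightarrow> (((nat \<Rightarrow> 'e) \<Rightarrow> complex) \<Rightarrow> ((nat \<Rightarrow> 'e) \<Rightarrow> complex)) \<Rightarrow> complex \<Rightarrow> bool" where
  "is_eigenvalue_on V A L \<mu> \<longleftrightarrow> (\<exists>g\<in>V. g \<noteq> (\<lambda>_. 0) \<and> op_minus_scalar A L \<mu> g = (\<lambda>_. 0))"

definition gen_eigenspace :: "((nat \<Rightarrow> 'e) \<Rightarrow> complex) set \<Rightarrow> ('e \<Rightarrow> 'e \<Rightarrow> bool)
      \<Rightarrow> (((nat \<Rightarrow> 'e) \<Rightarrow> complex) \<Rightarrow> ((nat \<Rightarrow> 'e) \<Rightarrow> complex)) \<Rightarrow> complex \<Rightarrow> ((nat \<Rightarrow> 'e) \<Rightarrow> complex) set" where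
  "gen_eigenspace V A L \<mu> = {g\<in>V. \<exists>k. (op_minus_scalar A L \<mu> ^^ k) g = (\<lambda>_. 0)}"

definition alg_mult_one :: "((nat \<Rightarrow> 'e) \<Rightarrow> complex) set \<Rightarrow> ('e \<Rightarrow> 'e \<Rightarrow> bool)
      \<Rightarrow> (((nat \<Rightarrow> 'e) \<Rightarrow> complex) \<Rightarrow> ((nat \<Rightarrow> 'e) \<Rightarrow> complex)) \<Rightarrow> complex \<Rightarrow> bool" where
  "alg_mult_one V A L \<mu> \<longleftrightarrow>
     (\<exists>g0\<in>gen_eigenspace V A L \<mu>. g0 \<noteq> (\<lambda>_. 0) \<and>
        (\<forall>g\<in>gen_eigenspace V A L \<mu>. \<exists>c::complex. g = (\<lambda>\<rho>. c * g0 \<rho>)))"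

end

(*
  Write \<lambda> = e^P(x) and let R be the Ruelle operator of the real potential x f.  The partition
  functions Z_n are submultiplicative, so by Fekete's lemma P(x) = lim (1/n) log Z_n, while
  R^n 1 <= Z_n.  If L_s \<phi> = \<mu> \<phi> with |\<mu>| = \<lambda>, then \<lambda> |\<phi>| <= R |\<phi>|; a strict inequality at one
  point would, by Holder continuity and finite irreducibility, give R^M |\<phi>| >= (1 + \<eta>) \<lambda>^M |\<phi>|
  everywhere, so Z_n would grow faster than \<lambda>^n.  Hence R |\<phi>| = \<lambda> |\<phi>|, and |\<phi>| is bounded away
  from zero.  Equality in the triangle inequality for L_s \<phi> then transports the phase of \<phi>
  along every transition, and around a periodic orbit of period p this forces (\<mu>/|\<mu>|)^p to be
  a fixed number: there are finitely many such \<mu>.  The eigenfunction combination vanishing at the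
  periodic point must be zero, so eigenspaces are one-dimensional; and a Jordan chain
  L_s G = \<mu> G + \<phi> would make |L_s^n G| grow like n \<lambda>^n, although it is dominated by
  R^n |G| = O(\<lambda>^n).
*)

theory Submission
  imports Defs
begin

section \<open>Words, sequences and cylinders\<close>

definition prepend :: "'e list \<Rightarrow> (nat \<Rightarrow> 'e) \<Rightarrow> (nat \<Rightarrow> 'e)" where
  "prepend w \<rho> = (\<lambda>i. if i < length w then w ! i else \<rho> (i - length w))"

lemma funpow_shift: "(shift ^^ j) \<rho> = (\<lambda>i. \<rho> (i + j))"
  by (induction j arbitrary: \<rho>) (auto simp: shift_def funpow_Suc_right)

lemma seq_cons_0 [simp]: "seq_cons e \<rho> 0 = e"
  and seq_cons_Suc [simp]: "seq_cons e \<rho> (Suc i) = \<rho> i"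
  by (simp_all add: seq_cons_def)

lemma prepend_Nil [simp]: "prepend [] \<rho> = \<rho>"
  by (simp add: prepend_def)

lemma prepend_Cons: "prepend (e # w) \<rho> = seq_cons e (prepend w \<rho>)"
  by (rule ext) (auto simp: prepend_def seq_cons_def split: nat.split)

lemma prepend_append: "prepend (u @ v) \<rho> = prepend u (prepend v \<rho>)"
  by (rule ext) (auto simp: prepend_def nth_append)

lemma prepend_snoc: "prepend (w @ [e]) \<rho> = prepend w (seq_cons e \<rho>)"
  by (simp add: prepend_append prepend_Cons)

lemma funpow_shift_prepend: "(shift ^^ length w) (prepend w \<rho>) = \<rho>"
  by (rule ext) (simp add: funpow_shift prepend_def)

lemma admissible_word_single [simp]: "admissible_word A [e]"
  by (simp add: admissible_word_def)

lemma admissible_word_Cons: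
  "admissible_word A (e # w) \<longleftrightarrow> (w \<noteq> [] \<longrightarrow> A e (w ! 0)) \<and> admissible_word A w"
  unfolding admissible_word_def
proof (intro iffI conjI impI allI)
  fix i assume "\<forall>i. Suc i < length (e # w) \<longrightarrow> A ((e # w) ! i) ((e # w) ! Suc i)"
    and "Suc i < length w"
  then show "A (w ! i) (w ! Suc i)" by (metis Suc_less_eq length_Cons nth_Cons_Suc)
next
  assume "\<forall>i. Suc i < length (e # w) \<longrightarrow> A ((e # w) ! i) ((e # w) ! Suc i)" and "w \<noteq> []"
  then show "A e (w ! 0)" by (metis length_Cons length_greater_0_conv nth_Cons_0 nth_Cons_Suc Suc_less_eq)
next
  fix i assume "(w \<noteq> [] \<longrightarrow> A e (w ! 0)) \<and> (\<forall>i. Suc i < length w \<longrightarrow> A (w ! i) (w ! Suc i))"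
    and "Suc i < length (e # w)"
  then show "A ((e # w) ! i) ((e # w) ! Suc i)" by (cases i) auto
qed

lemma admissible_word_append:
  "admissible_word A u \<Longrightarrow> u \<noteq> [] \<Longrightarrow> admissible_word A (last u # v) \<Longrightarrow> admissible_word A (u @ v)"
proof (induction u)
  case (Cons e u)
  show ?case
  proof (cases "u = []")
    case False
    then have "admissible_word A (u @ v)"
      using Cons by (simp add: admissible_word_Cons)
    then show ?thesis using Cons.prems(1) False by (simp add: admissible_word_Cons nth_append)
  qed (use Cons.prems(3) in simp)
qed simp

lemma seq_cons_admissible_iff:
  "seq_cons e \<rho> \<in> admissible_seqs A \<longleftrightarrow> A e (\<rho> 0) \<and> \<rho> \<in> admissible_seqs A"
  unfolding admissible_seqs_def
proof safe
  fix n assume "\<forall>n. A (seq_cons e \<rho> n) (seq_cons e \<rho> (Suc n))"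
  then show "A (\<rho> n) (\<rho> (Suc n))" by (metis seq_cons_Suc)
next
  assume "\<forall>n. A (seq_cons e \<rho> n) (seq_cons e \<rho> (Suc n))"
  then show "A e (\<rho> 0)" by (metis seq_cons_0 seq_cons_Suc)
next
  fix n assume "A e (\<rho> 0)" "\<forall>n. A (\<rho> n) (\<rho> (Suc n))"
  then show "A (seq_cons e \<rho> n) (seq_cons e \<rho> (Suc n))" by (cases n) auto
qed

lemma prepend_admissible_iff:
  "prepend w \<rho> \<in> admissible_seqs A \<longleftrightarrow> admissible_word A (w @ [\<rho> 0]) \<and> \<rho> \<in> admissible_seqs A"
proof (induction w)
  case (Cons e w)
  have "prepend w \<rho> 0 = (w @ [\<rho> 0]) ! 0" by (cases w) (auto simp: prepend_def)
  then show ?case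
    unfolding prepend_Cons seq_cons_admissible_iff Cons by (auto simp: admissible_word_Cons)
qed simp

lemma funpow_shift_admissible: "\<rho> \<in> admissible_seqs A \<Longrightarrow> (shift ^^ j) \<rho> \<in> admissible_seqs A"
  by (simp add: funpow_shift admissible_seqs_def)

lemma prepend_in_cylinder: "prepend w \<rho> \<in> admissible_seqs A \<Longrightarrow> prepend w \<rho> \<in> cylinder A w"
  by (simp add: cylinder_def prepend_def)

lemma cylinder_admissible_word: "\<tau> \<in> cylinder A w \<Longrightarrow> admissible_word A w"
  unfolding admissible_word_def
proof (intro allI impI)
  fix i assume t: "\<tau> \<in> cylinder A w" and i: "Suc i < length w"
  then have "\<tau> i = w ! i" "\<tau> (Suc i) = w ! Suc i" by (auto simp: cylinder_def)
  moreover have "A (\<tau> i) (\<tau> (Suc i))" using t by (auto simp: cylinder_def admissible_seqs_def)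
  ultimately show "A (w ! i) (w ! Suc i)" by simp
qed

lemma seq_cons_in_cylinder:
  "\<rho> \<in> admissible_seqs A \<Longrightarrow> A e (\<rho> 0) \<Longrightarrow> seq_cons e \<rho> \<in> cylinder A [e]"
  by (simp add: cylinder_def seq_cons_admissible_iff)

lemma funpow_shift_in_cylinder_nth:
  "\<tau> \<in> cylinder A w \<Longrightarrow> j < length w \<Longrightarrow> (shift ^^ j) \<tau> \<in> cylinder A [w ! j]"
  by (auto simp: cylinder_def funpow_shift_admissible) (simp add: funpow_shift)

lemma cylinder_take: "\<tau> \<in> cylinder A w \<Longrightarrow> \<tau> \<in> cylinder A (take m w)"
  by (auto simp: cylinder_def)

lemma cylinder_drop:
  "\<tau> \<in> cylinder A w \<Longrightarrow> m \<le> length w \<Longrightarrow> (shift ^^ m) \<tau> \<in> cylinder A (drop m w)"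
  by (auto simp: cylinder_def funpow_shift_admissible) (auto simp: funpow_shift add.commute)

lemma funpow_shift_seq_cons: "(shift ^^ j) \<rho> = seq_cons (\<rho> j) ((shift ^^ Suc j) \<rho>)"
  unfolding funpow_shift by (rule ext) (simp add: seq_cons_def split: nat.split)

lemma birkhoff_sum_Suc: "birkhoff_sum (Suc n) h \<tau> = birkhoff_sum n h \<tau> + h ((shift ^^ n) \<tau>)"
  by (simp add: birkhoff_sum_def)

lemma birkhoff_sum_0 [simp]: "birkhoff_sum 0 h \<tau> = 0"
  by (simp add: birkhoff_sum_def)

lemma birkhoff_sum_add:
  "birkhoff_sum (m + n) h \<tau> = birkhoff_sum m h \<tau> + birkhoff_sum n h ((shift ^^ m) \<tau>)"
proof (induction n)
  case (Suc n)
  have "(shift ^^ (m + n)) \<tau> = (shift ^^ n) ((shift ^^ m) \<tau>)"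
    by (metis add.commute funpow_add comp_apply)
  then show ?case using Suc by (simp add: birkhoff_sum_Suc)
qed simp

lemma birkhoff_sum_prepend_snoc:
  "birkhoff_sum (Suc (length w)) h (prepend (w @ [e]) \<rho>)
     = birkhoff_sum (length w) h (prepend w (seq_cons e \<rho>)) + h (seq_cons e \<rho>)"
  by (simp add: birkhoff_sum_Suc prepend_snoc funpow_shift_prepend)

section \<open>Subadditive sequences and summable families\<close>

lemma subadditive_le_linear:
  fixes a :: "nat \<Rightarrow> real"
  assumes sub: "\<And>m n. m \<ge> 1 \<Longrightarrow> n \<ge> 1 \<Longrightarrow> a (m + n) \<le> a m + a n"
    and N: "N \<ge> 1" and n: "n \<ge> 1"
  shows "a n \<le> real n * (a N / real N) + \<bar>a N\<bar> + (\<Sum>r\<in>{1..N}. \<bar>a r\<bar>)"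
proof -
  define B where "B = (\<Sum>r\<in>{1..N}. \<bar>a r\<bar>)"
  define t where "t = a N / real N"
  have multiple: "a (q * N + r) \<le> real q * a N + B" if r: "r \<in> {1..N}" for q r
  proof (induction q)
    case 0
    have "a r \<le> \<bar>a r\<bar>" by simp
    also have "\<dots> \<le> B" unfolding B_def by (rule member_le_sum) (use r in auto)
    finally show ?case by simp
  next
    case (Suc q)
    have "a (Suc q * N + r) \<le> a N + a (q * N + r)"
      using sub[of N "q * N + r"] N r by (simp add: algebra_simps)
    then show ?case using Suc by (simp add: algebra_simps)
  qed
  define q where "q = (n - 1) div N"
  define r where "r = (n - 1) mod N + 1"
  have r: "r \<in> {1..N}" unfolding r_def using N by (simp add: Suc_leI)
  have nqr: "n = q * N + r" unfolding q_def r_def using n by simp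
  have aN: "a N = real N * t" unfolding t_def using N by simp
  have "real q * a N \<le> real n * t + \<bar>a N\<bar>"
  proof (cases "t \<ge> 0")
    case True
    have "real q * real N \<le> real n" using nqr by (simp flip: of_nat_mult)
    then have "(real q * real N) * t \<le> real n * t" using True by (rule mult_right_mono)
    then show ?thesis using aN by simp
  next
    case False
    have "real n - real N \<le> real q * real N" using nqr r by (simp flip: of_nat_mult)
    then have "(real q * real N) * t \<le> (real n - real N) * t" using False by (intro mult_right_mono_neg) auto
    then show ?thesis using aN by (simp add: algebra_simps)
  qed
  then show ?thesis using multiple[OF r, of q] nqr unfolding B_def t_def by simp
qed

lemma fekete_subadditive:
  fixes a :: "nat \<Rightarrow> real"
  assumes sub: "\<And>m n. m \<ge> 1 \<Longrightarrow> n \<ge> 1 \<Longrightarrow> a (m + n) \<le> a m + a n"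
    and low: "\<And>n. n \<ge> 1 \<Longrightarrow> real n * \<gamma> \<le> a n"
  shows "(\<lambda>n. a n / real n) \<longlonglongrightarrow> (INF n\<in>{1..}. a n / real n)"
proof -
  have bdd: "bdd_below ((\<lambda>n. a n / real n) ` {1..})"
    by (rule bdd_belowI2[of _ \<gamma>]) (use low in \<open>auto simp: field_simps\<close>)
  show ?thesis
  proof (rule order_tendstoI)
    fix b assume b: "b < (INF n\<in>{1..}. a n / real n)"
    show "\<forall>\<^sub>F n in sequentially. b < a n / real n"
      using eventually_ge_at_top[of 1] by eventually_elim (use cINF_lower[OF bdd] b in force)
  next
    fix b assume "(INF n\<in>{1..}. a n / real n) < b"
    then obtain N where N: "N \<ge> 1" and aN: "a N / real N < b"
      using cINF_less_iff[OF _ bdd] by fastforce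
    define K where "K = \<bar>a N\<bar> + (\<Sum>r\<in>{1..N}. \<bar>a r\<bar>)"
    have "(\<lambda>n. K / real n) \<longlonglongrightarrow> 0"
      by (rule lim_const_over_n)
    then have "\<forall>\<^sub>F n in sequentially. K / real n < b - a N / real N"
      using aN by (simp add: order_tendsto_iff)
    then show "\<forall>\<^sub>F n in sequentially. a n / real n < b"
      using eventually_ge_at_top[of 1]
    proof eventually_elim
      case (elim n)
      have "a n / real n \<le> (real n * (a N / real N) + K) / real n"
        using subadditive_le_linear[OF sub N elim(2)] elim(2) unfolding K_def
        by (intro divide_right_mono) auto
      also have "\<dots> = a N / real N + K / real n" using elim(2) by (simp add: field_simps)
      finally show ?case using elim(1) by linarith
    qed
  qed
qed

lemma exp_decay_eventually_le:
  assumes "(\<alpha>::real) > 0" and "\<epsilon> > 0"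
  obtains N where "N \<ge> 1" and "K * exp (- (\<alpha> * (real N - 1))) \<le> \<epsilon>"
proof -
  have "(\<lambda>n. (K * exp \<alpha>) * exp (- \<alpha>) ^ n) \<longlonglongrightarrow> 0"
    using assms by (intro tendsto_mult_right_zero LIMSEQ_power_zero) simp
  then have "\<forall>\<^sub>F n in sequentially. (K * exp \<alpha>) * exp (- \<alpha>) ^ n < \<epsilon>"
    using assms by (simp add: order_tendsto_iff)
  then obtain N0 where N0: "\<And>n. n \<ge> N0 \<Longrightarrow> (K * exp \<alpha>) * exp (- \<alpha>) ^ n < \<epsilon>"
    unfolding eventually_sequentially by blast
  define N where "N = max N0 1"
  have "N \<ge> 1" "(K * exp \<alpha>) * exp (- \<alpha>) ^ N < \<epsilon>"
    using N0[of N] by (auto simp: N_def)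
  moreover have "exp (- \<alpha>) ^ N = exp (real N * (- \<alpha>))" by (rule exp_of_nat_mult[symmetric])
  ultimately show thesis
    by (intro that[of N]) (auto simp: exp_add[symmetric] algebra_simps)
qed

lemma norm_exp_minus_one_le: "norm (exp (z::complex) - 1) \<le> norm z * exp (norm z)"
proof -
  have "norm (exp z - exp 0) \<le> exp (norm z) * norm (z - 0)"
  proof (rule field_differentiable_bound[of "cball 0 (norm z)" exp exp])
    show "(exp has_field_derivative exp w) (at w within cball 0 (norm z))" for w :: complex
      by (auto intro!: derivative_eq_intros)
    show "norm (exp w) \<le> exp (norm z)" if "w \<in> cball 0 (norm z)" for w :: complex
      using that complex_Re_le_cmod[of w] by simp
  qed auto
  then show ?thesis by (simp add: mult.commute)
qed

lemma infsum_norm_le_dominating: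
  fixes u :: "'a \<Rightarrow> 'b::banach"
  assumes "b summable_on S" and "\<And>e. e \<in> S \<Longrightarrow> norm (u e) \<le> b e"
  shows "u summable_on S" and "norm (infsum u S) \<le> infsum b S"
proof -
  have ns: "(\<lambda>e. norm (u e)) summable_on S"
    by (rule Infinite_Sum.abs_summable_on_comparison_test'[OF assms])
  then show "u summable_on S" by (rule abs_summable_summable)
  have "norm (infsum u S) \<le> infsum (\<lambda>e. norm (u e)) S" by (rule norm_infsum_bound[OF ns])
  also have "\<dots> \<le> infsum b S" by (rule infsum_mono[OF ns assms(1)]) (rule assms(2))
  finally show "norm (infsum u S) \<le> infsum b S" .
qed

lemma infsum_diff:
  fixes u v :: "'a \<Rightarrow> 'b::banach"
  assumes "u summable_on S" and "v summable_on S"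
  shows "infsum (\<lambda>e. u e - v e) S = infsum u S - infsum v S"
  using infsum_add[OF assms(1) summable_on_uminus[THEN iffD2, OF assms(2)]]
  by (simp add: infsum_uminus)

lemma infsum_norm_eq_imp_aligned:
  fixes z :: "'a \<Rightarrow> complex"
  assumes sn: "(\<lambda>e. norm (z e)) summable_on S"
    and eq: "norm (infsum z S) = infsum (\<lambda>e. norm (z e)) S" and e: "e \<in> S"
  shows "of_real (norm (infsum z S)) * z e = of_real (norm (z e)) * infsum z S"
proof -
  define T where "T = infsum z S"
  define w where "w e = norm (z e) * norm T - Re (z e * cnj T)" for e
  have wnn: "0 \<le> w e" for e
    using complex_Re_le_cmod[of "z e * cnj T"] unfolding w_def by (simp add: norm_mult)
  have szc: "(\<lambda>e. z e * cnj T) summable_on S"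
    by (rule summable_on_cmult_left[OF abs_summable_summable[OF sn]])
  have sRe: "(\<lambda>e. Re (z e * cnj T)) summable_on S" by (rule summable_on_Re[OF szc])
  have sN: "(\<lambda>e. norm (z e) * norm T) summable_on S" by (rule summable_on_cmult_left[OF sn])
  have "infsum (\<lambda>e. Re (z e * cnj T)) S = Re (infsum (\<lambda>e. z e * cnj T) S)"
    by (rule infsum_Re[OF szc])
  also have "infsum (\<lambda>e. z e * cnj T) S = T * cnj T"
    unfolding T_def by (rule infsum_cmult_left')
  also have "\<dots> = norm T * norm T"
    by (simp add: complex_mult_cnj cmod_def power2_eq_square[symmetric])
  finally have "infsum w S = 0"
    unfolding w_def infsum_diff[OF sN sRe] using eq by (simp add: T_def infsum_cmult_left')
  moreover have "w summable_on S"
    unfolding w_def diff_conv_add_uminus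
    by (rule summable_on_add[OF sN]) (rule summable_on_uminus[THEN iffD2, OF sRe])
  ultimately have "w e = 0" using nonneg_infsum_le_0D[of w S e] wnn e by auto
  then have re: "Re (z e * cnj T) = cmod (z e * cnj T)" unfolding w_def by (simp add: norm_mult)
  moreover have "(cmod (z e * cnj T))\<^sup>2 = (Re (z e * cnj T))\<^sup>2 + (Im (z e * cnj T))\<^sup>2"
    by (simp add: cmod_power2)
  ultimately have "z e * cnj T = of_real (cmod (z e * cnj T))"
    by (simp add: complex_eq_iff)
  then have "z e * cnj T = of_real (norm (z e) * norm T)" by (simp add: norm_mult)
  then have "z e * (cnj T * T) = of_real (norm (z e) * norm T) * T" by (simp add: mult.assoc)
  then have "of_real (norm T) * (of_real (norm T) * z e) = of_real (norm T) * (of_real (norm (z e)) * T)"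
    by (simp add: complex_norm_square[symmetric] power2_eq_square mult.commute mult.left_commute)
  then show ?thesis unfolding T_def by (cases "norm T = 0") (auto simp: T_def)
qed

lemma infsum_norm_eq_imp_sgn_eq:
  fixes z :: "'a \<Rightarrow> complex"
  assumes sn: "(\<lambda>e. norm (z e)) summable_on S"
    and eq: "norm (infsum z S) = infsum (\<lambda>e. norm (z e)) S" and e: "e \<in> S" and nz: "z e \<noteq> 0"
  shows "sgn (z e) = sgn (infsum z S)"
proof -
  have "norm (z e) \<le> norm (infsum z S)"
    using finite_sum_le_infsum[OF sn, of "{e}"] e eq by simp
  then have "infsum z S \<noteq> 0" using nz by auto
  then show ?thesis
    using infsum_norm_eq_imp_aligned[OF sn eq e] nz by (simp add: sgn_eq field_simps)
qed

section \<open>Holder-type functions\<close>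

lemma holder_typeD:
  assumes "holder_type A \<alpha> G"
  obtains C where "C \<ge> 0"
    and "\<And>n \<rho> \<rho>'. n \<ge> 1 \<Longrightarrow> \<rho> \<in> admissible_seqs A \<Longrightarrow> \<rho>' \<in> admissible_seqs A \<Longrightarrow>
          (\<forall>i<n. \<rho> i = \<rho>' i) \<Longrightarrow> norm (G \<rho> - G \<rho>') \<le> C * exp (- (\<alpha> * (real n - 1)))"
proof -
  obtain C where C: "\<forall>n\<ge>1. \<forall>\<rho>\<in>admissible_seqs A. \<forall>\<rho>'\<in>admissible_seqs A.
      (\<forall>i<n. \<rho> i = \<rho>' i) \<longrightarrow> norm (G \<rho> - G \<rho>') * exp (\<alpha> * (real n - 1)) \<le> C"
    using assms unfolding holder_type_def by blast
  show thesis
  proof (rule that[of "max C 0"])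
    fix n \<rho> \<rho>' assume "n \<ge> 1" "\<rho> \<in> admissible_seqs A" "\<rho>' \<in> admissible_seqs A" "\<forall>i<n. \<rho> i = \<rho>' i"
    then have "norm (G \<rho> - G \<rho>') * exp (\<alpha> * (real n - 1)) \<le> max C 0" using C by force
    then have "norm (G \<rho> - G \<rho>') * exp (\<alpha> * (real n - 1)) * exp (- (\<alpha> * (real n - 1)))
        \<le> max C 0 * exp (- (\<alpha> * (real n - 1)))"
      by (rule mult_right_mono) simp
    then show "norm (G \<rho> - G \<rho>') \<le> max C 0 * exp (- (\<alpha> * (real n - 1)))"
      by (simp add: mult.assoc exp_minus)
  qed simp
qed

lemma holder_typeI:
  assumes "\<And>n \<rho> \<rho>'. n \<ge> 1 \<Longrightarrow> \<rho> \<in> admissible_seqs A \<Longrightarrow> \<rho>' \<in> admissible_seqs A \<Longrightarrow>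
          (\<forall>i<n. \<rho> i = \<rho>' i) \<Longrightarrow> norm (G \<rho> - G \<rho>') \<le> C * exp (- (\<alpha> * (real n - 1)))"
  shows "holder_type A \<alpha> G"
  unfolding holder_type_def
proof (intro exI allI impI ballI)
  fix n \<rho> \<rho>' assume "n \<ge> 1" "\<rho> \<in> admissible_seqs A" "\<rho>' \<in> admissible_seqs A" "\<forall>i<n. \<rho> i = \<rho>' i"
  then have "norm (G \<rho> - G \<rho>') * exp (\<alpha> * (real n - 1)) \<le> C * exp (- (\<alpha> * (real n - 1))) * exp (\<alpha> * (real n - 1))"
    using assms by (intro mult_right_mono) auto
  also have "C * exp (- (\<alpha> * (real n - 1))) * exp (\<alpha> * (real n - 1)) = C" by (simp add: exp_minus)
  finally show "norm (G \<rho> - G \<rho>') * exp (\<alpha> * (real n - 1)) \<le> C" .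
qed

lemma op_minus_scalar_eq_0_iff:
  "op_minus_scalar A L \<mu> G = (\<lambda>_. 0) \<longleftrightarrow> (\<forall>\<rho>\<in>admissible_seqs A. L G \<rho> = \<mu> * G \<rho>)"
  by (auto simp: op_minus_scalar_def fun_eq_iff)

lemma holder_space_zero: "G \<in> holder_space A \<alpha> \<Longrightarrow> \<rho> \<notin> admissible_seqs A \<Longrightarrow> G \<rho> = 0"
  by (simp add: holder_space_def)

lemma holder_space_bounded:
  assumes "G \<in> holder_space A \<alpha>"
  obtains B where "B \<ge> 0" and "\<forall>\<tau>\<in>admissible_seqs A. norm (G \<tau>) \<le> B"
proof -
  obtain B where "\<forall>\<tau>\<in>admissible_seqs A. norm (G \<tau>) \<le> B"
    using assms unfolding holder_space_def bounded_iff by auto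
  then show thesis by (intro that[of "max B 0"]) force+
qed

lemma holder_space_holder_type: "G \<in> holder_space A \<alpha> \<Longrightarrow> holder_type A \<alpha> G"
  by (simp add: holder_space_def)

lemma holder_spaceI:
  assumes "\<And>\<rho>. \<rho> \<notin> admissible_seqs A \<Longrightarrow> G \<rho> = 0"
    and "\<forall>\<tau>\<in>admissible_seqs A. norm (G \<tau>) \<le> B" and "holder_type A \<alpha> G"
  shows "G \<in> holder_space A \<alpha>"
  unfolding holder_space_def bounded_iff using assms by blast

lemma holder_type_lincomb:
  fixes G1 G2 :: "(nat \<Rightarrow> 'e) \<Rightarrow> 'a::real_normed_field"
  assumes "holder_type A \<alpha> G1" and "holder_type A \<alpha> G2"
  shows "holder_type A \<alpha> (\<lambda>\<tau>. a * G1 \<tau> + b * G2 \<tau>)"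
proof -
  obtain C1 C2 where
    C1: "\<And>n \<rho> \<rho>'. n \<ge> 1 \<Longrightarrow> \<rho> \<in> admissible_seqs A \<Longrightarrow> \<rho>' \<in> admissible_seqs A \<Longrightarrow>
          (\<forall>i<n. \<rho> i = \<rho>' i) \<Longrightarrow> norm (G1 \<rho> - G1 \<rho>') \<le> C1 * exp (- (\<alpha> * (real n - 1)))" and
    C2: "\<And>n \<rho> \<rho>'. n \<ge> 1 \<Longrightarrow> \<rho> \<in> admissible_seqs A \<Longrightarrow> \<rho>' \<in> admissible_seqs A \<Longrightarrow>
          (\<forall>i<n. \<rho> i = \<rho>' i) \<Longrightarrow> norm (G2 \<rho> - G2 \<rho>') \<le> C2 * exp (- (\<alpha> * (real n - 1)))"
    using holder_typeD[OF assms(1)] holder_typeD[OF assms(2)] by metis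
  show ?thesis
  proof (rule holder_typeI)
    fix n \<rho> \<rho>' assume h: "1 \<le> n" "\<rho> \<in> admissible_seqs A" "\<rho>' \<in> admissible_seqs A" "\<forall>i<n. \<rho> i = \<rho>' i"
    have "a * G1 \<rho> + b * G2 \<rho> - (a * G1 \<rho>' + b * G2 \<rho>') = a * (G1 \<rho> - G1 \<rho>') + b * (G2 \<rho> - G2 \<rho>')"
      by (simp add: algebra_simps)
    then have "norm (a * G1 \<rho> + b * G2 \<rho> - (a * G1 \<rho>' + b * G2 \<rho>'))
        \<le> norm a * norm (G1 \<rho> - G1 \<rho>') + norm b * norm (G2 \<rho> - G2 \<rho>')"
      by (metis norm_mult norm_triangle_ineq)
    also have "\<dots> \<le> norm a * (C1 * exp (- (\<alpha> * (real n - 1)))) + norm b * (C2 * exp (- (\<alpha> * (real n - 1))))"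
      using C1[OF h] C2[OF h] by (intro add_mono mult_left_mono) auto
    finally show "norm (a * G1 \<rho> + b * G2 \<rho> - (a * G1 \<rho>' + b * G2 \<rho>'))
        \<le> (norm a * C1 + norm b * C2) * exp (- (\<alpha> * (real n - 1)))"
      by (simp add: algebra_simps)
  qed
qed

lemma holder_space_lincomb:
  assumes G1: "G1 \<in> holder_space A \<alpha>" and G2: "G2 \<in> holder_space A \<alpha>"
  shows "(\<lambda>\<tau>. a * G1 \<tau> + b * G2 \<tau>) \<in> holder_space A \<alpha>"
proof -
  obtain B1 B2 where B1: "\<forall>\<tau>\<in>admissible_seqs A. norm (G1 \<tau>) \<le> B1"
    and B2: "\<forall>\<tau>\<in>admissible_seqs A. norm (G2 \<tau>) \<le> B2"
    using holder_space_bounded G1 G2 by metis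
  have "norm (a * G1 \<tau> + b * G2 \<tau>) \<le> norm a * B1 + norm b * B2" if "\<tau> \<in> admissible_seqs A" for \<tau>
  proof -
    have "norm (a * G1 \<tau> + b * G2 \<tau>) \<le> norm a * norm (G1 \<tau>) + norm b * norm (G2 \<tau>)"
      by (metis norm_mult norm_triangle_ineq)
    also have "\<dots> \<le> norm a * B1 + norm b * B2"
      using B1 B2 that by (intro add_mono mult_left_mono) auto
    finally show ?thesis .
  qed
  then show ?thesis
    using holder_space_zero[OF G1] holder_space_zero[OF G2]
      holder_type_lincomb[OF holder_space_holder_type[OF G1] holder_space_holder_type[OF G2]]
    by (intro holder_spaceI[where B = "norm a * B1 + norm b * B2"]) auto
qed

lemma holder_type_cong:
  "\<forall>\<tau>\<in>admissible_seqs A. G \<tau> = H \<tau> \<Longrightarrow> holder_type A \<alpha> G \<Longrightarrow> holder_type A \<alpha> H"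
  unfolding holder_type_def by simp

lemma holder_type_of_real_iff:
  "holder_type A \<alpha> (\<lambda>\<tau>. complex_of_real (h \<tau>)) \<longleftrightarrow> holder_type A \<alpha> h"
  unfolding holder_type_def by (simp flip: of_real_diff)

lemma holder_type_norm:
  assumes "holder_type A \<alpha> G"
  shows "holder_type A \<alpha> (\<lambda>\<tau>. norm (G \<tau>))"
proof -
  obtain C where C: "\<And>n \<rho> \<rho>'. n \<ge> 1 \<Longrightarrow> \<rho> \<in> admissible_seqs A \<Longrightarrow> \<rho>' \<in> admissible_seqs A \<Longrightarrow>
          (\<forall>i<n. \<rho> i = \<rho>' i) \<Longrightarrow> norm (G \<rho> - G \<rho>') \<le> C * exp (- (\<alpha> * (real n - 1)))"
    using holder_typeD[OF assms] by metis
  show ?thesis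
  proof (rule holder_typeI[where C = C])
    fix n \<rho> \<rho>' assume h: "n \<ge> 1" "\<rho> \<in> admissible_seqs A" "\<rho>' \<in> admissible_seqs A" "\<forall>i<n. \<rho> i = \<rho>' i"
    have "norm (norm (G \<rho>) - norm (G \<rho>')) \<le> norm (G \<rho> - G \<rho>')"
      using norm_triangle_ineq3 by simp
    also have "\<dots> \<le> C * exp (- (\<alpha> * (real n - 1)))" by (rule C[OF h])
    finally show "norm (norm (G \<rho>) - norm (G \<rho>')) \<le> C * exp (- (\<alpha> * (real n - 1)))" .
  qed
qed

lemma holder_space_norm:
  assumes "G \<in> holder_space A \<alpha>"
  shows "(\<lambda>\<tau>. complex_of_real (norm (G \<tau>))) \<in> holder_space A \<alpha>"
proof -
  obtain B where "\<forall>\<tau>\<in>admissible_seqs A. norm (G \<tau>) \<le> B"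
    using holder_space_bounded[OF assms] by metis
  then show ?thesis
    using holder_space_zero[OF assms] holder_type_norm[OF holder_space_holder_type[OF assms]]
    by (intro holder_spaceI[where B = B]) (auto simp: holder_type_of_real_iff)
qed

section \<open>The real Ruelle operator of the potential \<open>x f\<close>\<close>

locale holder_potential =
  fixes A :: "'e::countable \<Rightarrow> 'e \<Rightarrow> bool" and f :: "(nat \<Rightarrow> 'e) \<Rightarrow> real"
    and \<alpha> x Cf :: real
  assumes irreducible: "finitely_irreducible A"
    and alpha_pos: "\<alpha> > 0"
    and f_holder: "\<And>n \<rho> \<rho>'. n \<ge> 1 \<Longrightarrow> \<rho> \<in> admissible_seqs A \<Longrightarrow> \<rho>' \<in> admissible_seqs A \<Longrightarrow>
          (\<forall>i<n. \<rho> i = \<rho>' i) \<Longrightarrow> \<bar>f \<rho> - f \<rho>'\<bar> \<le> Cf * exp (- (\<alpha> * (real n - 1)))"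
    and Cf_nonneg: "Cf \<ge> 0"
    and summable_xf: "summable_pot A (\<lambda>\<rho>. x * f \<rho>)"
begin

abbreviation "X \<equiv> admissible_seqs A"

definition "pot = (\<lambda>\<rho>. x * f \<rho>)"

definition "sup_pot e = Sup (pot ` cylinder A [e])"

definition "letter_sum = (\<Sum>\<^sub>\<infinity>e\<in>{e. cylinder A [e] \<noteq> {}}. exp (sup_pot e))"

lemma pot_oscillation_on_letter:
  assumes "\<rho> \<in> X" "\<rho>' \<in> X" "\<rho> 0 = \<rho>' 0"
  shows "\<bar>pot \<rho> - pot \<rho>'\<bar> \<le> \<bar>x\<bar> * Cf"
proof -
  have "\<bar>pot \<rho> - pot \<rho>'\<bar> = \<bar>x\<bar> * \<bar>f \<rho> - f \<rho>'\<bar>"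
    by (simp add: pot_def abs_mult[symmetric] right_diff_distrib)
  also have "\<dots> \<le> \<bar>x\<bar> * Cf"
    using f_holder[of 1 \<rho> \<rho>'] assms by (intro mult_left_mono) auto
  finally show ?thesis .
qed

lemma summable_exp_sup_pot: "(\<lambda>e. exp (sup_pot e)) summable_on {e. cylinder A [e] \<noteq> {}}"
  using summable_xf unfolding summable_pot_def pot_def sup_pot_def by blast

lemma bdd_above_pot_letter: "bdd_above (pot ` cylinder A [e])"
  using summable_xf by (simp add: summable_pot_def pot_def)

lemma pot_le_sup_pot: "\<tau> \<in> cylinder A [e] \<Longrightarrow> pot \<tau> \<le> sup_pot e"
  unfolding sup_pot_def by (rule cSup_upper) (auto simp: bdd_above_pot_letter)

lemma sup_pot_le_pot:
  assumes t: "\<tau> \<in> cylinder A [e]"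
  shows "sup_pot e - \<bar>x\<bar> * Cf \<le> pot \<tau>"
proof -
  have "sup_pot e \<le> pot \<tau> + \<bar>x\<bar> * Cf"
    unfolding sup_pot_def
  proof (rule cSup_least)
    fix s assume "s \<in> pot ` cylinder A [e]"
    then obtain \<tau>' where "\<tau>' \<in> cylinder A [e]" "s = pot \<tau>'" by auto
    then show "s \<le> pot \<tau> + \<bar>x\<bar> * Cf"
      using pot_oscillation_on_letter[of \<tau>' \<tau>] t by (auto simp: cylinder_def)
  qed (use t in auto)
  then show ?thesis by linarith
qed

lemma letter_sum_nonneg: "0 \<le> letter_sum"
  unfolding letter_sum_def by (rule infsum_nonneg) auto

lemma seq_cons_admissible: "\<rho> \<in> X \<Longrightarrow> A e (\<rho> 0) \<Longrightarrow> seq_cons e \<rho> \<in> X"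
  by (simp add: seq_cons_admissible_iff)

lemma predecessors_live: "\<rho> \<in> X \<Longrightarrow> {e. A e (\<rho> 0)} \<subseteq> {e. cylinder A [e] \<noteq> {}}"
  using seq_cons_in_cylinder[of \<rho> A] by auto

lemma summable_exp_sup_pot_predecessors:
  assumes "\<rho> \<in> X"
  shows "(\<lambda>e. exp (sup_pot e)) summable_on {e. A e (\<rho> 0)}"
    and "(\<Sum>\<^sub>\<infinity>e\<in>{e. A e (\<rho> 0)}. exp (sup_pot e)) \<le> letter_sum"
proof -
  show s: "(\<lambda>e. exp (sup_pot e)) summable_on {e. A e (\<rho> 0)}"
    by (rule summable_on_subset_banach[OF summable_exp_sup_pot predecessors_live[OF assms]])
  show "(\<Sum>\<^sub>\<infinity>e\<in>{e. A e (\<rho> 0)}. exp (sup_pot e)) \<le> letter_sum"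
    unfolding letter_sum_def
    by (rule infsum_mono2[OF s summable_exp_sup_pot predecessors_live[OF assms]]) auto
qed

definition ruelle :: "((nat \<Rightarrow> 'e) \<Rightarrow> real) \<Rightarrow> (nat \<Rightarrow> 'e) \<Rightarrow> real" where
  "ruelle h \<rho> = (\<Sum>\<^sub>\<infinity>e\<in>{e. A e (\<rho> 0)}. exp (pot (seq_cons e \<rho>)) * h (seq_cons e \<rho>))"

definition bounded_on_X :: "((nat \<Rightarrow> 'e) \<Rightarrow> real) \<Rightarrow> bool" where
  "bounded_on_X h \<longleftrightarrow> (\<exists>H. \<forall>\<tau>\<in>X. \<bar>h \<tau>\<bar> \<le> H)"

lemma ruelle_summable_abs_le:
  assumes r: "\<rho> \<in> X" and H: "\<forall>\<tau>\<in>X. \<bar>h \<tau>\<bar> \<le> H"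
  shows "(\<lambda>e. exp (pot (seq_cons e \<rho>)) * h (seq_cons e \<rho>)) summable_on {e. A e (\<rho> 0)}"
    and "\<bar>ruelle h \<rho>\<bar> \<le> H * letter_sum"
proof -
  have H0: "0 \<le> H" using H r by force
  have dom_term: "norm (exp (pot (seq_cons e \<rho>)) * h (seq_cons e \<rho>)) \<le> H * exp (sup_pot e)"
    if "e \<in> {e. A e (\<rho> 0)}" for e
  proof -
    have c: "seq_cons e \<rho> \<in> cylinder A [e]" using that r seq_cons_in_cylinder by auto
    have "exp (pot (seq_cons e \<rho>)) * \<bar>h (seq_cons e \<rho>)\<bar> \<le> exp (sup_pot e) * H"
      using pot_le_sup_pot[OF c] H c by (intro mult_mono) (auto simp: cylinder_def)
    then show ?thesis by (simp add: abs_mult mult.commute)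
  qed
  have dom: "(\<lambda>e. H * exp (sup_pot e)) summable_on {e. A e (\<rho> 0)}"
    by (rule summable_on_cmult_right[OF summable_exp_sup_pot_predecessors(1)[OF r]])
  show "(\<lambda>e. exp (pot (seq_cons e \<rho>)) * h (seq_cons e \<rho>)) summable_on {e. A e (\<rho> 0)}"
    by (rule infsum_norm_le_dominating(1)[OF dom dom_term])
  have "\<bar>ruelle h \<rho>\<bar> \<le> (\<Sum>\<^sub>\<infinity>e\<in>{e. A e (\<rho> 0)}. H * exp (sup_pot e))"
    unfolding ruelle_def using infsum_norm_le_dominating(2)[OF dom dom_term] by simp
  also have "\<dots> = H * (\<Sum>\<^sub>\<infinity>e\<in>{e. A e (\<rho> 0)}. exp (sup_pot e))"
    by (rule infsum_cmult_right')
  also have "\<dots> \<le> H * letter_sum"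
    using summable_exp_sup_pot_predecessors(2)[OF r] H0 by (rule mult_left_mono)
  finally show "\<bar>ruelle h \<rho>\<bar> \<le> H * letter_sum" .
qed

lemma ruelle_summable:
  "\<rho> \<in> X \<Longrightarrow> bounded_on_X h \<Longrightarrow>
    (\<lambda>e. exp (pot (seq_cons e \<rho>)) * h (seq_cons e \<rho>)) summable_on {e. A e (\<rho> 0)}"
  unfolding bounded_on_X_def using ruelle_summable_abs_le(1) by blast

lemma ruelle_mono:
  assumes "\<rho> \<in> X" "bounded_on_X h1" "bounded_on_X h2" "\<forall>\<tau>\<in>X. h1 \<tau> \<le> h2 \<tau>"
  shows "ruelle h1 \<rho> \<le> ruelle h2 \<rho>"
  unfolding ruelle_def
  by (rule infsum_mono[OF ruelle_summable[OF assms(1,2)] ruelle_summable[OF assms(1,3)]])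
     (use assms seq_cons_admissible in \<open>auto intro!: mult_left_mono\<close>)

lemma ruelle_add:
  assumes "\<rho> \<in> X" "bounded_on_X h1" "bounded_on_X h2"
  shows "ruelle (\<lambda>\<tau>. h1 \<tau> + h2 \<tau>) \<rho> = ruelle h1 \<rho> + ruelle h2 \<rho>"
  unfolding ruelle_def
  by (subst infsum_add[OF ruelle_summable[OF assms(1,2)] ruelle_summable[OF assms(1,3)], symmetric])
     (simp add: distrib_left)

lemma ruelle_cmult: "ruelle (\<lambda>\<tau>. c * h \<tau>) \<rho> = c * ruelle h \<rho>"
  unfolding ruelle_def by (subst infsum_cmult_right'[symmetric]) (simp add: ac_simps)

lemma ruelle_cong: "\<rho> \<in> X \<Longrightarrow> \<forall>\<tau>\<in>X. h1 \<tau> = h2 \<tau> \<Longrightarrow> ruelle h1 \<rho> = ruelle h2 \<rho>"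
  unfolding ruelle_def by (rule infsum_cong) (use seq_cons_admissible in auto)

lemma ruelle_nonneg: "\<rho> \<in> X \<Longrightarrow> \<forall>\<tau>\<in>X. 0 \<le> h \<tau> \<Longrightarrow> 0 \<le> ruelle h \<rho>"
  unfolding ruelle_def by (rule infsum_nonneg) (use seq_cons_admissible in auto)

lemma ruelle_term_le:
  assumes r: "\<rho> \<in> X" and b: "bounded_on_X h" and nn: "\<forall>\<tau>\<in>X. 0 \<le> h \<tau>" and e: "A e (\<rho> 0)"
  shows "exp (pot (seq_cons e \<rho>)) * h (seq_cons e \<rho>) \<le> ruelle h \<rho>"
proof -
  have "(\<Sum>e\<in>{e}. exp (pot (seq_cons e \<rho>)) * h (seq_cons e \<rho>)) \<le> ruelle h \<rho>"
    unfolding ruelle_def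
    by (rule finite_sum_le_infsum[OF ruelle_summable[OF r b]]) (use e nn seq_cons_admissible r in auto)
  then show ?thesis by simp
qed

lemma ruelle_pow_abs_le: "\<forall>\<tau>\<in>X. \<bar>h \<tau>\<bar> \<le> H \<Longrightarrow> \<forall>\<tau>\<in>X. \<bar>(ruelle ^^ n) h \<tau>\<bar> \<le> H * letter_sum ^ n"
proof (induction n)
  case (Suc n)
  then have "\<forall>\<tau>\<in>X. \<bar>ruelle ((ruelle ^^ n) h) \<tau>\<bar> \<le> (H * letter_sum ^ n) * letter_sum"
    using ruelle_summable_abs_le(2) by blast
  then show ?case by (simp add: ac_simps)
qed simp

lemma bounded_on_X_ruelle_pow: "bounded_on_X h \<Longrightarrow> bounded_on_X ((ruelle ^^ n) h)"
  unfolding bounded_on_X_def using ruelle_pow_abs_le by blast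

lemma ruelle_pow_cmult: "(ruelle ^^ n) (\<lambda>\<tau>. c * h \<tau>) = (\<lambda>\<rho>. c * (ruelle ^^ n) h \<rho>)"
proof (induction n)
  case (Suc n)
  show ?case by (rule ext) (simp add: Suc ruelle_cmult)
qed simp

lemma ruelle_pow_cong: "\<forall>\<tau>\<in>X. h1 \<tau> = h2 \<tau> \<Longrightarrow> \<forall>\<rho>\<in>X. (ruelle ^^ n) h1 \<rho> = (ruelle ^^ n) h2 \<rho>"
  by (induction n) (auto intro: ruelle_cong)

lemma ruelle_pow_mono:
  assumes "bounded_on_X h1" "bounded_on_X h2" "\<forall>\<tau>\<in>X. h1 \<tau> \<le> h2 \<tau>"
  shows "\<forall>\<rho>\<in>X. (ruelle ^^ n) h1 \<rho> \<le> (ruelle ^^ n) h2 \<rho>"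
proof (induction n)
  case (Suc n)
  then show ?case using bounded_on_X_ruelle_pow assms by (auto intro!: ruelle_mono)
qed (use assms in simp)

lemma ruelle_pow_nonneg: "\<forall>\<tau>\<in>X. 0 \<le> h \<tau> \<Longrightarrow> \<forall>\<rho>\<in>X. 0 \<le> (ruelle ^^ n) h \<rho>"
  by (induction n) (auto intro: ruelle_nonneg)

lemma ruelle_pow_add:
  assumes "bounded_on_X h1" "bounded_on_X h2"
  shows "\<forall>\<rho>\<in>X. (ruelle ^^ n) (\<lambda>\<tau>. h1 \<tau> + h2 \<tau>) \<rho> = (ruelle ^^ n) h1 \<rho> + (ruelle ^^ n) h2 \<rho>"
proof (induction n)
  case (Suc n)
  show ?case
  proof
    fix \<rho> assume r: "\<rho> \<in> X"
    have "(ruelle ^^ Suc n) (\<lambda>\<tau>. h1 \<tau> + h2 \<tau>) \<rho>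
        = ruelle (\<lambda>\<tau>. (ruelle ^^ n) h1 \<tau> + (ruelle ^^ n) h2 \<tau>) \<rho>"
      using Suc r by (simp add: ruelle_cong)
    then show "(ruelle ^^ Suc n) (\<lambda>\<tau>. h1 \<tau> + h2 \<tau>) \<rho> = (ruelle ^^ Suc n) h1 \<rho> + (ruelle ^^ Suc n) h2 \<rho>"
      using ruelle_add[OF r bounded_on_X_ruelle_pow[OF assms(1)] bounded_on_X_ruelle_pow[OF assms(2)]]
      by simp
  qed
qed simp

lemma ruelle_pow_eigen:
  assumes "\<forall>\<rho>\<in>X. ruelle h \<rho> = c * h \<rho>"
  shows "\<forall>\<rho>\<in>X. (ruelle ^^ m) h \<rho> = c ^ m * h \<rho>"
proof (induction m)
  case (Suc m)
  show ?case
  proof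
    fix \<rho> assume r: "\<rho> \<in> X"
    have "(ruelle ^^ Suc m) h \<rho> = (ruelle ^^ m) (ruelle h) \<rho>"
      by (simp add: funpow_Suc_right del: funpow.simps)
    also have "\<dots> = (ruelle ^^ m) (\<lambda>\<tau>. c * h \<tau>) \<rho>"
      using ruelle_pow_cong[of "ruelle h" "\<lambda>\<tau>. c * h \<tau>" m] assms r by auto
    also have "\<dots> = c ^ Suc m * h \<rho>" using Suc r by (simp add: ruelle_pow_cmult)
    finally show "(ruelle ^^ Suc m) h \<rho> = c ^ Suc m * h \<rho>" .
  qed
qed simp

lemma ruelle_pow_word_le:
  assumes nn: "\<forall>\<tau>\<in>X. 0 \<le> h \<tau>" and b: "bounded_on_X h"
  shows "\<rho> \<in> X \<Longrightarrow> prepend w \<rho> \<in> X \<Longrightarrow>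
    exp (birkhoff_sum (length w) pot (prepend w \<rho>)) * h (prepend w \<rho>) \<le> (ruelle ^^ length w) h \<rho>"
proof (induction w arbitrary: \<rho> rule: rev_induct)
  case (snoc e w)
  have X1: "prepend w (seq_cons e \<rho>) \<in> X" using snoc.prems by (simp add: prepend_snoc)
  then have X2: "seq_cons e \<rho> \<in> X" by (simp add: prepend_admissible_iff)
  then have Ae: "A e (\<rho> 0)" by (simp add: seq_cons_admissible_iff)
  have "exp (birkhoff_sum (length (w @ [e])) pot (prepend (w @ [e]) \<rho>)) * h (prepend (w @ [e]) \<rho>)
      = exp (pot (seq_cons e \<rho>)) *
        (exp (birkhoff_sum (length w) pot (prepend w (seq_cons e \<rho>))) * h (prepend w (seq_cons e \<rho>)))"
  proof -
    have "birkhoff_sum (length (w @ [e])) pot (prepend (w @ [e]) \<rho>)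
        = birkhoff_sum (length w) pot (prepend w (seq_cons e \<rho>)) + pot (seq_cons e \<rho>)"
      by (metis birkhoff_sum_prepend_snoc length_append_singleton)
    then show ?thesis by (simp add: exp_add prepend_snoc)
  qed
  also have "\<dots> \<le> exp (pot (seq_cons e \<rho>)) * (ruelle ^^ length w) h (seq_cons e \<rho>)"
    using snoc.IH[OF X2 X1] by (intro mult_left_mono) auto
  also have "\<dots> \<le> ruelle ((ruelle ^^ length w) h) \<rho>"
    by (rule ruelle_term_le[OF snoc.prems(1) bounded_on_X_ruelle_pow[OF b] ruelle_pow_nonneg[OF nn] Ae])
  finally show ?case by simp
qed simp

section \<open>Partition functions and the pressure of \<open>x f\<close>\<close>

definition "live_words n = {w \<in> adm_words A n. cylinder A w \<noteq> {}}"

definition "weight n w = exp (Sup (birkhoff_sum n pot ` cylinder A w))"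

definition "Z n = infsum (weight n) (live_words n)"

lemma birkhoff_sum_bounds:
  assumes t: "\<tau> \<in> cylinder A w"
  shows "birkhoff_sum (length w) pot \<tau> \<le> (\<Sum>j<length w. sup_pot (w ! j))"
    and "(\<Sum>j<length w. sup_pot (w ! j) - \<bar>x\<bar> * Cf) \<le> birkhoff_sum (length w) pot \<tau>"
proof -
  show "birkhoff_sum (length w) pot \<tau> \<le> (\<Sum>j<length w. sup_pot (w ! j))"
    unfolding birkhoff_sum_def
    by (rule sum_mono) (use funpow_shift_in_cylinder_nth[OF t] pot_le_sup_pot in auto)
  show "(\<Sum>j<length w. sup_pot (w ! j) - \<bar>x\<bar> * Cf) \<le> birkhoff_sum (length w) pot \<tau>"
    unfolding birkhoff_sum_def
    by (rule sum_mono) (use funpow_shift_in_cylinder_nth[OF t] sup_pot_le_pot in auto)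
qed

lemma bdd_above_birkhoff_sum: "bdd_above (birkhoff_sum (length w) pot ` cylinder A w)"
  using birkhoff_sum_bounds(1) by (intro bdd_aboveI2) auto

lemma birkhoff_sum_le_Sup: "\<tau> \<in> cylinder A w \<Longrightarrow> birkhoff_sum (length w) pot \<tau> \<le> Sup (birkhoff_sum (length w) pot ` cylinder A w)"
  by (rule cSup_upper) (auto simp: bdd_above_birkhoff_sum)

lemma weight_pos: "weight m w > 0"
  by (simp add: weight_def)

lemma live_words_length: "w \<in> live_words m \<Longrightarrow> length w = m"
  by (simp add: live_words_def adm_words_def)

lemma take_drop_live_words:
  assumes w: "w \<in> live_words (m + n)"
  shows "take m w \<in> live_words m" "drop m w \<in> live_words n"
proof -
  obtain \<tau> where t: "\<tau> \<in> cylinder A w" using w by (auto simp: live_words_def)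
  have lw: "length w = m + n" using live_words_length[OF w] .
  have t1: "\<tau> \<in> cylinder A (take m w)" by (rule cylinder_take[OF t])
  have t2: "(shift ^^ m) \<tau> \<in> cylinder A (drop m w)" by (rule cylinder_drop[OF t]) (simp add: lw)
  show "take m w \<in> live_words m"
    using t1 lw cylinder_admissible_word[OF t1] by (auto simp: live_words_def adm_words_def)
  show "drop m w \<in> live_words n"
    using t2 lw cylinder_admissible_word[OF t2] by (auto simp: live_words_def adm_words_def)
qed

lemma weight_split:
  assumes w: "w \<in> live_words (m + n)"
  shows "weight (m + n) w \<le> weight m (take m w) * weight n (drop m w)"
proof -
  have lw: "length w = m + n" using live_words_length[OF w] .
  have ne: "cylinder A w \<noteq> {}" using w by (simp add: live_words_def)
  have "Sup (birkhoff_sum (m + n) pot ` cylinder A w) \<le>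
        Sup (birkhoff_sum m pot ` cylinder A (take m w)) + Sup (birkhoff_sum n pot ` cylinder A (drop m w))"
  proof (rule cSup_least)
    show "birkhoff_sum (m + n) pot ` cylinder A w \<noteq> {}" using ne by simp
  next
    fix s assume "s \<in> birkhoff_sum (m + n) pot ` cylinder A w"
    then obtain \<tau> where t: "\<tau> \<in> cylinder A w" and s: "s = birkhoff_sum (m + n) pot \<tau>" by auto
    have t1: "\<tau> \<in> cylinder A (take m w)" by (rule cylinder_take[OF t])
    have t2: "(shift ^^ m) \<tau> \<in> cylinder A (drop m w)" by (rule cylinder_drop[OF t]) (simp add: lw)
    have l1: "length (take m w) = m" and l2: "length (drop m w) = n" using lw by auto
    have "s = birkhoff_sum m pot \<tau> + birkhoff_sum n pot ((shift ^^ m) \<tau>)" using s by (simp add: birkhoff_sum_add)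
    also have "\<dots> \<le> Sup (birkhoff_sum m pot ` cylinder A (take m w)) + Sup (birkhoff_sum n pot ` cylinder A (drop m w))"
      using birkhoff_sum_le_Sup[OF t1] birkhoff_sum_le_Sup[OF t2] unfolding l1 l2 by (rule add_mono)
    finally show "s \<le> \<dots>" .
  qed
  then show ?thesis unfolding weight_def by (simp add: exp_add[symmetric])
qed

lemma sum_weight_split:
  assumes F: "finite F" "F \<subseteq> live_words (m + n)"
  shows "sum (weight (m + n)) F \<le> sum (weight m) (take m ` F) * sum (weight n) (drop m ` F)"
proof -
  have "sum (weight (m + n)) F \<le> sum (\<lambda>w. weight m (take m w) * weight n (drop m w)) F"
    using weight_split F by (intro sum_mono) auto
  also have "\<dots> = sum (\<lambda>(u, v). weight m u * weight n v) ((\<lambda>w. (take m w, drop m w)) ` F)"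
  proof (subst sum.reindex)
    show "inj_on (\<lambda>w. (take m w, drop m w)) F"
      by (rule inj_onI) (metis append_take_drop_id prod.inject)
  qed (simp add: o_def)
  also have "\<dots> \<le> sum (\<lambda>(u, v). weight m u * weight n v) (take m ` F \<times> drop m ` F)"
    by (rule sum_mono2) (use F in \<open>auto intro!: mult_nonneg_nonneg less_imp_le[OF weight_pos]\<close>)
  also have "\<dots> = sum (weight m) (take m ` F) * sum (weight n) (drop m ` F)"
    by (simp add: sum_product sum.cartesian_product)
  finally show ?thesis .
qed

lemma live_words_0: "w \<in> live_words 0 \<Longrightarrow> w = [] \<and> weight 0 w = 1"
proof -
  assume w: "w \<in> live_words 0"
  then have "w = []" "cylinder A [] \<noteq> {}" by (auto simp: live_words_def adm_words_def)
  moreover from this have "birkhoff_sum 0 pot ` cylinder A [] = {0}" by auto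
  ultimately show ?thesis by (simp add: weight_def)
qed

lemma weight_singleton: "weight (Suc 0) [e] = exp (sup_pot e)"
  by (simp add: weight_def sup_pot_def birkhoff_sum_def)

lemma sum_weight_letters_le:
  assumes "finite U" "U \<subseteq> live_words (Suc 0)"
  shows "sum (weight (Suc 0)) U \<le> letter_sum"
proof -
  have sing: "\<And>w. w \<in> U \<Longrightarrow> w = [hd w]" using assms(2) live_words_length
      by (metis (no_types, lifting) One_nat_def Suc_length_conv length_0_conv list.sel(1) subsetD)
  have U: "U = (\<lambda>e. [e]) ` (hd ` U)"
    using sing by (auto simp: image_image)
  have sub: "hd ` U \<subseteq> {e. cylinder A [e] \<noteq> {}}"
  proof
    fix e assume "e \<in> hd ` U"
    then obtain w where "w \<in> U" "e = hd w" by auto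
    then have "[e] \<in> live_words (Suc 0)" using sing assms(2) by auto
    then show "e \<in> {e. cylinder A [e] \<noteq> {}}" by (simp add: live_words_def)
  qed
  have "sum (weight (Suc 0)) U = sum (\<lambda>e. weight (Suc 0) [e]) (hd ` U)"
    by (subst U, subst sum.reindex) (auto simp: inj_on_def)
  also have "\<dots> = sum (\<lambda>e. exp (sup_pot e)) (hd ` U)" by (simp add: weight_singleton)
  also have "\<dots> \<le> letter_sum"
    unfolding letter_sum_def by (rule finite_sum_le_infsum[OF summable_exp_sup_pot]) (use assms sub in auto)
  finally show ?thesis .
qed


lemma sum_weight_le_letter_sum_pow: "finite F \<Longrightarrow> F \<subseteq> live_words n \<Longrightarrow> sum (weight n) F \<le> letter_sum ^ n"
proof (induction n arbitrary: F)
  case 0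
  then have "F \<subseteq> {[]}" and "\<forall>w\<in>F. weight 0 w = 1" using live_words_0 by blast+
  then show ?case by (cases "F = {}") (auto dest: subset_singletonD)
next
  case (Suc n)
  have F: "F \<subseteq> live_words (Suc 0 + n)" using Suc.prems by simp
  have "sum (weight (Suc n)) F = sum (weight (Suc 0 + n)) F" by simp
  also have "\<dots> \<le> sum (weight (Suc 0)) (take (Suc 0) ` F) * sum (weight n) (drop (Suc 0) ` F)"
    by (rule sum_weight_split[OF Suc.prems(1) F])
  also have "\<dots> \<le> letter_sum * letter_sum ^ n"
  proof (rule mult_mono)
    show "sum (weight (Suc 0)) (take (Suc 0) ` F) \<le> letter_sum"
      by (rule sum_weight_letters_le) (use Suc.prems F take_drop_live_words(1) in blast)+
    show "sum (weight n) (drop (Suc 0) ` F) \<le> letter_sum ^ n"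
      by (rule Suc.IH) (use Suc.prems F take_drop_live_words(2) in blast)+
    show "0 \<le> letter_sum" by (rule letter_sum_nonneg)
    show "0 \<le> sum (weight n) (drop (Suc 0) ` F)" by (rule sum_nonneg) (simp add: less_imp_le[OF weight_pos])
  qed
  finally show ?case by simp
qed

lemma summable_weight: "(weight n) summable_on (live_words n)"
  by (rule nonneg_bdd_above_summable_on)
     (auto simp: less_imp_le[OF weight_pos] intro!: bdd_aboveI2 sum_weight_le_letter_sum_pow)

lemma Z_nonneg: "0 \<le> Z n"
  unfolding Z_def by (rule infsum_nonneg) (simp add: less_imp_le[OF weight_pos])

lemma sum_weight_le_Z: "finite F \<Longrightarrow> F \<subseteq> live_words n \<Longrightarrow> sum (weight n) F \<le> Z n"
  unfolding Z_def by (rule finite_sum_le_infsum[OF summable_weight]) (auto simp: less_imp_le[OF weight_pos])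

lemma weight_le_Z: "w \<in> live_words n \<Longrightarrow> weight n w \<le> Z n"
  using sum_weight_le_Z[of "{w}" n] by simp

lemma Z_submult: "Z (m + n) \<le> Z m * Z n"
  unfolding Z_def[of "m + n"]
proof (rule infsum_le_finite_sums[OF summable_weight])
  fix F assume F: "finite F" "F \<subseteq> live_words (m + n)"
  have "sum (weight (m + n)) F \<le> sum (weight m) (take m ` F) * sum (weight n) (drop m ` F)"
    by (rule sum_weight_split[OF F])
  also have "\<dots> \<le> Z m * Z n"
  proof (rule mult_mono)
    show "sum (weight m) (take m ` F) \<le> Z m" by (rule sum_weight_le_Z) (use F take_drop_live_words(1) in blast)+
    show "sum (weight n) (drop m ` F) \<le> Z n" by (rule sum_weight_le_Z) (use F take_drop_live_words(2) in blast)+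
    show "0 \<le> Z m" by (rule Z_nonneg)
    show "0 \<le> sum (weight n) (drop m ` F)" by (rule sum_nonneg) (simp add: less_imp_le[OF weight_pos])
  qed
  finally show "sum (weight (m + n)) F \<le> Z m * Z n" .
qed

lemma pressure_finite_at_xf: "pressure_finite_at A (\<lambda>\<rho>. x * f \<rho>) n"
  unfolding pressure_finite_at_def
proof
  show "\<forall>w\<in>adm_words A n. bdd_above (birkhoff_sum n (\<lambda>\<rho>. x * f \<rho>) ` cylinder A w)"
    using bdd_above_birkhoff_sum unfolding pot_def adm_words_def by auto
  show "(\<lambda>w. exp (Sup (birkhoff_sum n (\<lambda>\<rho>. x * f \<rho>) ` cylinder A w))) summable_on
        {w \<in> adm_words A n. cylinder A w \<noteq> {}}"
    using summable_weight[of n] unfolding weight_def live_words_def pot_def .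
qed

lemma exp_birkhoff_sum_le_Z:
  assumes "\<rho> \<in> X"
  shows "exp (birkhoff_sum n pot \<rho>) \<le> Z n"
proof -
  define w where "w = map \<rho> [0..<n]"
  have c: "\<rho> \<in> cylinder A w" unfolding w_def using assms by (simp add: cylinder_def)
  have lw: "length w = n" by (simp add: w_def)
  have "w \<in> live_words n"
    using c lw cylinder_admissible_word[OF c] by (auto simp: live_words_def adm_words_def)
  moreover have "exp (birkhoff_sum n pot \<rho>) \<le> weight n w"
    unfolding weight_def using birkhoff_sum_le_Sup[OF c] lw by simp
  ultimately show ?thesis using weight_le_Z order_trans by blast
qed

definition "connectors = (SOME \<Omega>. finite \<Omega> \<and> (\<forall>w\<in>\<Omega>. admissible_word A w) \<and>
                  (\<forall>e e'. \<exists>w\<in>\<Omega>. admissible_word A (e # w @ [e'])))"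

lemma connectors: "finite connectors" "\<forall>e e'. \<exists>w\<in>connectors. admissible_word A (e # w @ [e'])"
  using someI_ex[OF irreducible[unfolded finitely_irreducible_def]] unfolding connectors_def by blast+

text \<open>Connecting any letter to itself gives a closed admissible loop, whose periodic repetition
  is an admissible sequence; it makes \<open>X\<close> nonempty and the partition functions positive.\<close>

definition "loop_word = (SOME c. c \<noteq> [] \<and> admissible_word A (c @ [c ! 0]))"

lemma loop_word: "loop_word \<noteq> []" "admissible_word A (loop_word @ [loop_word ! 0])"
proof -
  obtain e w where "admissible_word A (e # w @ [e])" using connectors(2) by blast
  then have "\<exists>c. c \<noteq> [] \<and> admissible_word A (c @ [c ! 0])" by (intro exI[of _ "e # w"]) simp
  then show "loop_word \<noteq> []" "admissible_word A (loop_word @ [loop_word ! 0])"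
    unfolding loop_word_def by (metis (mono_tags, lifting) someI_ex)+
qed

definition "period = length loop_word"

lemma period_pos: "period > 0"
  using loop_word(1) by (simp add: period_def)

definition "periodic_pt i = loop_word ! (i mod period)"

lemma periodic_pt_admissible: "periodic_pt \<in> X"
  unfolding admissible_seqs_def mem_Collect_eq
proof (intro allI)
  fix i
  define r where "r = i mod period"
  have r: "r < period" unfolding r_def using period_pos by simp
  have adm: "A ((loop_word @ [loop_word ! 0]) ! r) ((loop_word @ [loop_word ! 0]) ! Suc r)"
    using loop_word(2) r unfolding admissible_word_def period_def by simp
  have a1: "(loop_word @ [loop_word ! 0]) ! r = periodic_pt i" unfolding periodic_pt_def r_def[symmetric] using r period_def by (simp add: nth_append)
  have a2: "(loop_word @ [loop_word ! 0]) ! Suc r = periodic_pt (Suc i)"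
  proof (cases "Suc r = period")
    case True
    then have "Suc i mod period = 0" unfolding r_def by (simp add: mod_Suc)
    then show ?thesis unfolding periodic_pt_def using True period_def by (simp add: nth_append)
  next
    case False
    then have "Suc i mod period = Suc r" unfolding r_def by (simp add: mod_Suc)
    then show ?thesis unfolding periodic_pt_def using False r period_def by (simp add: nth_append)
  qed
  show "A (periodic_pt i) (periodic_pt (Suc i))" using adm a1 a2 by simp
qed

lemma funpow_shift_periodic_pt: "(shift ^^ j) periodic_pt = (shift ^^ (j mod period)) periodic_pt"
  by (rule ext) (simp add: funpow_shift periodic_pt_def mod_add_right_eq)

lemma funpow_shift_period: "(shift ^^ period) periodic_pt = periodic_pt"
  using funpow_shift_periodic_pt[of period] by simp

lemma Z_pos: "0 < Z n"
  using exp_birkhoff_sum_le_Z[OF periodic_pt_admissible, of n] exp_gt_zero less_le_trans by blast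

lemma ln_Z_lower_linear: "\<exists>\<gamma>. \<forall>n. real n * \<gamma> \<le> ln (Z n)"
proof
  define \<gamma> where "\<gamma> = - (\<Sum>j<period. \<bar>pot ((shift ^^ j) periodic_pt)\<bar>)"
  have gj: "\<gamma> \<le> pot ((shift ^^ j) periodic_pt)" for j
  proof -
    have "\<bar>pot ((shift ^^ (j mod period)) periodic_pt)\<bar> \<le> (\<Sum>j<period. \<bar>pot ((shift ^^ j) periodic_pt)\<bar>)"
      by (rule member_le_sum) (use period_pos in auto)
    then show ?thesis unfolding \<gamma>_def funpow_shift_periodic_pt[of j] by linarith
  qed
  show "\<forall>n. real n * \<gamma> \<le> ln (Z n)"
  proof
    fix n
    have "real n * \<gamma> \<le> birkhoff_sum n pot periodic_pt"
      using sum_mono[of "{..<n}" "\<lambda>_. \<gamma>", OF gj] by (simp add: birkhoff_sum_def)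
    also have "\<dots> \<le> ln (Z n)"
      using exp_birkhoff_sum_le_Z[OF periodic_pt_admissible, of n] Z_pos by (simp add: ln_ge_iff)
    finally show "real n * \<gamma> \<le> ln (Z n)" .
  qed
qed

definition "Px = (INF n\<in>{1..}. ln (Z n) / real n)"

lemma ln_Z_tendsto: "(\<lambda>n. ln (Z n) / real n) \<longlonglongrightarrow> Px"
proof -
  obtain \<gamma> where \<gamma>: "\<And>n. real n * \<gamma> \<le> ln (Z n)" using ln_Z_lower_linear by blast
  show ?thesis unfolding Px_def
  proof (rule fekete_subadditive)
    fix m n :: nat
    have "ln (Z (m + n)) \<le> ln (Z m * Z n)"
      using Z_submult Z_pos by (simp add: ln_le_cancel_iff)
    also have "\<dots> = ln (Z m) + ln (Z n)" using Z_pos[of m] Z_pos[of n] by (simp add: ln_mult)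
    finally show "ln (Z (m + n)) \<le> ln (Z m) + ln (Z n)" .
  qed (rule \<gamma>)
qed

lemma pressure_xf_eq: "pressure A (\<lambda>\<rho>. x * f \<rho>) = ereal Px"
proof -
  have eq: "(\<lambda>n. ereal (ln (\<Sum>\<^sub>\<infinity>w\<in>{w\<in>adm_words A n. cylinder A w \<noteq> {}}.
                     exp (Sup (birkhoff_sum n (\<lambda>\<rho>. x * f \<rho>) ` cylinder A w))) / real n))
           = (\<lambda>n. ereal (ln (Z n) / real n))"
    by (simp add: Z_def weight_def[abs_def] live_words_def pot_def)
  have "(\<lambda>n. ereal (ln (Z n) / real n)) \<longlonglongrightarrow> ereal Px"
    using ln_Z_tendsto by (simp add: lim_ereal)
  then have "lim (\<lambda>n. ereal (ln (Z n) / real n)) = ereal Px" by (rule limI)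
  then show ?thesis unfolding pressure_def eq using pressure_finite_at_xf by simp
qed

definition "preimage_words m \<rho> = {w. length w = m \<and> prepend w \<rho> \<in> X}"
definition "orbit_sum m \<rho> = infsum (\<lambda>w. exp (birkhoff_sum m pot (prepend w \<rho>))) (preimage_words m \<rho>)"

lemma preimage_words_subset: "\<rho> \<in> X \<Longrightarrow> preimage_words m \<rho> \<subseteq> live_words m"
proof
  fix w assume "w \<in> preimage_words m \<rho>"
  then have w: "length w = m" "prepend w \<rho> \<in> X" by (auto simp: preimage_words_def)
  have c: "prepend w \<rho> \<in> cylinder A w" by (rule prepend_in_cylinder[OF w(2)])
  show "w \<in> live_words m" using c w cylinder_admissible_word[OF c] by (auto simp: live_words_def adm_words_def)
qed

lemma exp_birkhoff_sum_le_weight: "w \<in> preimage_words m \<rho> \<Longrightarrow> exp (birkhoff_sum m pot (prepend w \<rho>)) \<le> weight m w"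
proof -
  assume "w \<in> preimage_words m \<rho>"
  then have w: "length w = m" "prepend w \<rho> \<in> X" by (auto simp: preimage_words_def)
  have c: "prepend w \<rho> \<in> cylinder A w" by (rule prepend_in_cylinder[OF w(2)])
  show ?thesis unfolding weight_def using birkhoff_sum_le_Sup[OF c] w(1) by simp
qed

lemma summable_orbit_sum: "\<rho> \<in> X \<Longrightarrow> (\<lambda>w. exp (birkhoff_sum m pot (prepend w \<rho>))) summable_on (preimage_words m \<rho>)"
  by (rule summable_on_comparison_test[OF summable_on_subset_banach[OF summable_weight preimage_words_subset]])
     (auto intro: exp_birkhoff_sum_le_weight)

lemma orbit_sum_le_Z: "\<rho> \<in> X \<Longrightarrow> orbit_sum m \<rho> \<le> Z m"
proof -
  assume r: "\<rho> \<in> X"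
  have "orbit_sum m \<rho> \<le> infsum (weight m) (preimage_words m \<rho>)"
    unfolding orbit_sum_def
    by (rule infsum_mono[OF summable_orbit_sum[OF r] summable_on_subset_banach[OF summable_weight preimage_words_subset[OF r]]])
       (rule exp_birkhoff_sum_le_weight)
  also have "\<dots> \<le> Z m"
    unfolding Z_def
    by (rule infsum_mono2[OF summable_on_subset_banach[OF summable_weight preimage_words_subset[OF r]] summable_weight preimage_words_subset[OF r]])
       (simp add: less_imp_le[OF weight_pos])
  finally show ?thesis .
qed

lemma orbit_sum_nonneg: "0 \<le> orbit_sum m \<rho>"
  unfolding orbit_sum_def by (rule infsum_nonneg) simp

lemma ruelle_orbit_sum_le:
  assumes r: "\<rho> \<in> X"
  shows "ruelle (orbit_sum m) \<rho> \<le> orbit_sum (Suc m) \<rho>"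
proof -
  define S where "S = Sigma {e. A e (\<rho> 0)} (\<lambda>e. preimage_words m (seq_cons e \<rho>))"
  define J where "J = (\<lambda>(e::'e, w::'e list). w @ [e])"
  define h where "h = (\<lambda>u. exp (birkhoff_sum (Suc m) pot (prepend u \<rho>)))"
  define k where "k = (\<lambda>(e, w). exp (pot (seq_cons e \<rho>)) * exp (birkhoff_sum m pot (prepend w (seq_cons e \<rho>))))"
  have JS: "J ` S \<subseteq> preimage_words (Suc m) \<rho>"
    unfolding J_def S_def preimage_words_def by (auto simp: prepend_snoc)
  have injJ: "inj_on J S" unfolding J_def by (rule inj_onI) auto
  have hs: "h summable_on (preimage_words (Suc m) \<rho>)" unfolding h_def by (rule summable_orbit_sum[OF r])
  have hJS: "h summable_on (J ` S)" by (rule summable_on_subset_banach[OF hs JS])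
  have kJ: "k p = (h \<circ> J) p" if "p \<in> S" for p
  proof -
    obtain e w where p: "p = (e, w)" by (cases p)
    then have lw: "length w = m" using that unfolding S_def preimage_words_def by auto
    show ?thesis
      using birkhoff_sum_prepend_snoc[of w pot e \<rho>]
      unfolding p k_def h_def J_def lw by (simp add: exp_add mult.commute)
  qed
  have sumS: "k summable_on S"
    using summable_on_cong[THEN iffD2, OF kJ summable_on_reindex[OF injJ, THEN iffD1, OF hJS]] .
  have "ruelle (orbit_sum m) \<rho> = (\<Sum>\<^sub>\<infinity>e\<in>{e. A e (\<rho> 0)}. \<Sum>\<^sub>\<infinity>w\<in>preimage_words m (seq_cons e \<rho>). k (e, w))"
    unfolding ruelle_def orbit_sum_def k_def by (simp add: infsum_cmult_right')
  also have "\<dots> = infsum k S"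
    unfolding S_def by (rule infsum_Sigma_banach) (use sumS in \<open>simp add: S_def\<close>)
  also have "\<dots> = infsum h (J ` S)"
    using infsum_cong[of S k "h \<circ> J", OF kJ] infsum_reindex[OF injJ, of h] by simp
  also have "\<dots> \<le> infsum h (preimage_words (Suc m) \<rho>)"
    by (rule infsum_mono2[OF hJS hs JS]) (simp add: h_def)
  finally show ?thesis by (simp add: h_def orbit_sum_def)
qed

lemma ruelle_pow_one_le_orbit_sum: "\<rho> \<in> X \<Longrightarrow> (ruelle ^^ m) (\<lambda>_. 1) \<rho> \<le> orbit_sum m \<rho>"
proof (induction m arbitrary: \<rho>)
  case 0
  then have "preimage_words 0 \<rho> = {[]}" by (auto simp: preimage_words_def)
  then show ?case by (simp add: orbit_sum_def)
next
  case (Suc m)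
  have "bounded_on_X (\<lambda>_. 1)" "bounded_on_X (orbit_sum m)"
    unfolding bounded_on_X_def using orbit_sum_le_Z orbit_sum_nonneg by (auto intro: exI[of _ 1] exI[of _ "Z m"])
  then have "ruelle ((ruelle ^^ m) (\<lambda>_. 1)) \<rho> \<le> ruelle (orbit_sum m) \<rho>"
    using Suc by (intro ruelle_mono bounded_on_X_ruelle_pow) auto
  also have "\<dots> \<le> orbit_sum (Suc m) \<rho>" by (rule ruelle_orbit_sum_le[OF Suc.prems])
  finally show ?case by simp
qed

lemma ruelle_pow_one_le_Z: "\<rho> \<in> X \<Longrightarrow> (ruelle ^^ m) (\<lambda>_. 1) \<rho> \<le> Z m"
  using ruelle_pow_one_le_orbit_sum orbit_sum_le_Z order_trans by blast

section \<open>The transfer operator on \<open>C\<^sup>0\<^sup>,\<^sup>\<alpha>\<close>\<close>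

abbreviation "V \<equiv> holder_space A \<alpha>"

lemma norm_exp_sf: "Re s = x \<Longrightarrow> norm (exp (s * complex_of_real (f \<tau>))) = exp (pot \<tau>)"
  by (simp add: pot_def)

lemma transfer_op_summable_norm_le:
  assumes s: "Re s = x" and r: "\<rho> \<in> X" and H: "\<forall>\<tau>\<in>X. norm (G \<tau>) \<le> H"
  shows "(\<lambda>e. exp (s * complex_of_real (f (seq_cons e \<rho>))) * G (seq_cons e \<rho>)) summable_on {e. A e (\<rho> 0)}"
    and "norm (transfer_op A f s G \<rho>) \<le> ruelle (\<lambda>\<tau>. norm (G \<tau>)) \<rho>"
proof -
  have "bounded_on_X (\<lambda>\<tau>. norm (G \<tau>))" unfolding bounded_on_X_def using H by auto
  note dom = ruelle_summable[OF r this]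
  have le: "norm (exp (s * complex_of_real (f (seq_cons e \<rho>))) * G (seq_cons e \<rho>))
      \<le> exp (pot (seq_cons e \<rho>)) * norm (G (seq_cons e \<rho>))" for e
    using norm_exp_sf[OF s] by (simp add: norm_mult)
  show "(\<lambda>e. exp (s * complex_of_real (f (seq_cons e \<rho>))) * G (seq_cons e \<rho>)) summable_on {e. A e (\<rho> 0)}"
    by (rule infsum_norm_le_dominating(1)[OF dom le])
  show "norm (transfer_op A f s G \<rho>) \<le> ruelle (\<lambda>\<tau>. norm (G \<tau>)) \<rho>"
    unfolding transfer_op_def ruelle_def using r infsum_norm_le_dominating(2)[OF dom le] by simp
qed

lemma transfer_op_outside: "\<rho> \<notin> X \<Longrightarrow> transfer_op A f s G \<rho> = 0"
  by (simp add: transfer_op_def)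

lemma transfer_op_cong: "\<forall>\<tau>\<in>X. G1 \<tau> = G2 \<tau> \<Longrightarrow> transfer_op A f s G1 \<rho> = transfer_op A f s G2 \<rho>"
  unfolding transfer_op_def by (auto intro!: infsum_cong simp: seq_cons_admissible)

lemma transfer_op_lincomb:
  assumes s: "Re s = x" and "\<forall>\<tau>\<in>X. norm (G1 \<tau>) \<le> H1" and "\<forall>\<tau>\<in>X. norm (G2 \<tau>) \<le> H2"
  shows "transfer_op A f s (\<lambda>\<tau>. a * G1 \<tau> + b * G2 \<tau>) \<rho> = a * transfer_op A f s G1 \<rho> + b * transfer_op A f s G2 \<rho>"
proof (cases "\<rho> \<in> X")
  case True
  note s1 = transfer_op_summable_norm_le(1)[OF s True assms(2)]
    and s2 = transfer_op_summable_norm_le(1)[OF s True assms(3)]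
  have "transfer_op A f s (\<lambda>\<tau>. a * G1 \<tau> + b * G2 \<tau>) \<rho> =
     (\<Sum>\<^sub>\<infinity>e\<in>{e. A e (\<rho> 0)}. a * (exp (s * complex_of_real (f (seq_cons e \<rho>))) * G1 (seq_cons e \<rho>)) +
          b * (exp (s * complex_of_real (f (seq_cons e \<rho>))) * G2 (seq_cons e \<rho>)))"
    unfolding transfer_op_def using True by (simp add: algebra_simps)
  also have "\<dots> = (\<Sum>\<^sub>\<infinity>e\<in>{e. A e (\<rho> 0)}. a * (exp (s * complex_of_real (f (seq_cons e \<rho>))) * G1 (seq_cons e \<rho>))) +
          (\<Sum>\<^sub>\<infinity>e\<in>{e. A e (\<rho> 0)}. b * (exp (s * complex_of_real (f (seq_cons e \<rho>))) * G2 (seq_cons e \<rho>)))"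
    by (rule infsum_add) (use s1 s2 summable_on_cmult_right in blast)+
  also have "\<dots> = a * transfer_op A f s G1 \<rho> + b * transfer_op A f s G2 \<rho>"
    unfolding transfer_op_def using True by (simp add: infsum_cmult_right')
  finally show ?thesis .
qed (simp add: transfer_op_outside)

lemma transfer_op_of_real:
  assumes r: "\<rho> \<in> X" and b: "bounded_on_X h"
  shows "transfer_op A f (complex_of_real x) (\<lambda>\<tau>. complex_of_real (h \<tau>)) \<rho> = complex_of_real (ruelle h \<rho>)"
proof -
  have "transfer_op A f (complex_of_real x) (\<lambda>\<tau>. complex_of_real (h \<tau>)) \<rho> =
        infsum (complex_of_real \<circ> (\<lambda>e. exp (pot (seq_cons e \<rho>)) * h (seq_cons e \<rho>))) {e. A e (\<rho> 0)}"
    unfolding transfer_op_def using r by (simp add: pot_def exp_of_real[symmetric] o_def)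
  also have "\<dots> = complex_of_real (ruelle h \<rho>)"
    unfolding ruelle_def by (rule infsum_comm_additive_general) (auto simp: ruelle_summable[OF r b])
  finally show ?thesis .
qed

lemma norm_exp_sf_diff_le:
  assumes s: "Re s = x" and c: "\<sigma>' \<in> cylinder A [e]"
    and d: "\<bar>f \<sigma> - f \<sigma>'\<bar> \<le> d" "d \<le> Cf"
  shows "norm (exp (s * complex_of_real (f \<sigma>)) - exp (s * complex_of_real (f \<sigma>')))
      \<le> exp (sup_pot e) * (cmod s * d * exp (cmod s * Cf))"
proof -
  define z where "z = s * complex_of_real (f \<sigma> - f \<sigma>')"
  have d0: "0 \<le> d" using d(1) by linarith
  have nz: "norm z \<le> cmod s * d" "norm z \<le> cmod s * Cf"
    unfolding z_def norm_mult norm_of_real using d by (auto intro: mult_left_mono)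
  have "exp (s * complex_of_real (f \<sigma>)) - exp (s * complex_of_real (f \<sigma>'))
      = exp (s * complex_of_real (f \<sigma>')) * (exp z - 1)"
    unfolding z_def by (simp add: exp_add[symmetric] algebra_simps)
  then have "norm (exp (s * complex_of_real (f \<sigma>)) - exp (s * complex_of_real (f \<sigma>')))
      = exp (pot \<sigma>') * norm (exp z - 1)"
    using norm_exp_sf[OF s, of \<sigma>'] by (simp add: norm_mult)
  also have "\<dots> \<le> exp (sup_pot e) * (norm z * exp (norm z))"
    using pot_le_sup_pot[OF c] by (intro mult_mono norm_exp_minus_one_le) auto
  also have "\<dots> \<le> exp (sup_pot e) * (cmod s * d * exp (cmod s * Cf))"
    using nz d0 by (intro mult_left_mono mult_mono) auto
  finally show ?thesis .
qed

lemma transfer_term_diff_le: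
  assumes s: "Re s = x" and B: "\<forall>\<tau>\<in>X. norm (G \<tau>) \<le> B"
    and C: "\<And>n \<rho> \<rho>'. n \<ge> 1 \<Longrightarrow> \<rho> \<in> X \<Longrightarrow> \<rho>' \<in> X \<Longrightarrow> (\<forall>i<n. \<rho> i = \<rho>' i) \<Longrightarrow>
              norm (G \<rho> - G \<rho>') \<le> C * exp (- (\<alpha> * (real n - 1)))"
    and h: "\<rho> \<in> X" "\<rho>' \<in> X" "\<forall>i<n. \<rho> i = \<rho>' i" and e: "A e (\<rho> 0)" and n: "n \<ge> 1"
  defines "\<sigma> \<equiv> seq_cons e \<rho>" and "\<sigma>' \<equiv> seq_cons e \<rho>'"
  shows "norm (exp (s * complex_of_real (f \<sigma>)) * G \<sigma> - exp (s * complex_of_real (f \<sigma>')) * G \<sigma>')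
      \<le> (C + cmod s * Cf * exp (cmod s * Cf) * B) * exp (- (\<alpha> * real n)) * exp (sup_pot e)"
proof -
  define ee where "ee = exp (- (\<alpha> * real n))"
  have r0: "\<rho>' 0 = \<rho> 0" using h n by auto
  have c: "\<sigma> \<in> cylinder A [e]" "\<sigma>' \<in> cylinder A [e]"
    unfolding \<sigma>_def \<sigma>'_def
    using seq_cons_in_cylinder[OF h(1) e] seq_cons_in_cylinder[OF h(2), of e] e r0 by auto
  then have X: "\<sigma> \<in> X" "\<sigma>' \<in> X" by (auto simp: cylinder_def)
  have agree: "\<forall>i<Suc n. \<sigma> i = \<sigma>' i"
    unfolding \<sigma>_def \<sigma>'_def using h(3) by (auto simp: seq_cons_def split: nat.split)
  have dG: "norm (G \<sigma> - G \<sigma>') \<le> C * ee"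
    using C[OF _ X agree] unfolding ee_def by simp
  have df: "\<bar>f \<sigma> - f \<sigma>'\<bar> \<le> Cf * ee"
    using f_holder[OF _ X agree] unfolding ee_def by simp
  have "Cf * ee \<le> Cf" unfolding ee_def using Cf_nonneg alpha_pos by (simp add: mult_left_le)
  note da = norm_exp_sf_diff_le[OF s c(2) df this]
  have "exp (s * complex_of_real (f \<sigma>)) * G \<sigma> - exp (s * complex_of_real (f \<sigma>')) * G \<sigma>'
      = exp (s * complex_of_real (f \<sigma>)) * (G \<sigma> - G \<sigma>')
        + (exp (s * complex_of_real (f \<sigma>)) - exp (s * complex_of_real (f \<sigma>'))) * G \<sigma>'"
    by (simp add: algebra_simps)
  then have "norm (exp (s * complex_of_real (f \<sigma>)) * G \<sigma> - exp (s * complex_of_real (f \<sigma>')) * G \<sigma>')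
      \<le> exp (pot \<sigma>) * norm (G \<sigma> - G \<sigma>')
        + norm (exp (s * complex_of_real (f \<sigma>)) - exp (s * complex_of_real (f \<sigma>'))) * norm (G \<sigma>')"
    using norm_exp_sf[OF s] by (metis norm_mult norm_triangle_ineq)
  also have "\<dots> \<le> exp (sup_pot e) * (C * ee) + exp (sup_pot e) * (cmod s * (Cf * ee) * exp (cmod s * Cf)) * B"
    using pot_le_sup_pot[OF c(1)] dG da B X(2) Cf_nonneg
    by (intro add_mono mult_mono) (auto simp: ee_def)
  also have "\<dots> = (C + cmod s * Cf * exp (cmod s * Cf) * B) * ee * exp (sup_pot e)"
    by (simp add: algebra_simps)
  finally show ?thesis unfolding ee_def .
qed

lemma transfer_op_holder_estimate:
  assumes s: "Re s = x" and B: "0 \<le> B" "\<forall>\<tau>\<in>X. norm (G \<tau>) \<le> B"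
    and C: "0 \<le> C" "\<And>n \<rho> \<rho>'. n \<ge> 1 \<Longrightarrow> \<rho> \<in> X \<Longrightarrow> \<rho>' \<in> X \<Longrightarrow> (\<forall>i<n. \<rho> i = \<rho>' i) \<Longrightarrow>
              norm (G \<rho> - G \<rho>') \<le> C * exp (- (\<alpha> * (real n - 1)))"
    and h: "1 \<le> n" "\<rho> \<in> X" "\<rho>' \<in> X" "\<forall>i<n. \<rho> i = \<rho>' i"
  defines "K \<equiv> C + cmod s * Cf * exp (cmod s * Cf) * B"
  shows "norm (transfer_op A f s G \<rho> - transfer_op A f s G \<rho>') \<le> K * letter_sum * exp (- (\<alpha> * (real n - 1)))"
proof -
  have r0: "\<rho>' 0 = \<rho> 0" using h by auto
  have K0: "0 \<le> K" unfolding K_def using B C Cf_nonneg by simp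
  define ee where "ee = exp (- (\<alpha> * real n))"
  let ?u = "\<lambda>e. exp (s * complex_of_real (f (seq_cons e \<rho>))) * G (seq_cons e \<rho>)"
  let ?v = "\<lambda>e. exp (s * complex_of_real (f (seq_cons e \<rho>'))) * G (seq_cons e \<rho>')"
  have su: "?u summable_on {e. A e (\<rho> 0)}" by (rule transfer_op_summable_norm_le(1)[OF s h(2) B(2)])
  have sv: "?v summable_on {e. A e (\<rho> 0)}" using transfer_op_summable_norm_le(1)[OF s h(3) B(2)] r0 by simp
  have tb: "norm (?u e - ?v e) \<le> K * ee * exp (sup_pot e)" if "e \<in> {e. A e (\<rho> 0)}" for e
    using transfer_term_diff_le[OF s B(2) C(2) h(2-4) _ h(1), of e] that unfolding K_def ee_def by blast
  have "norm (transfer_op A f s G \<rho> - transfer_op A f s G \<rho>') = norm (infsum (\<lambda>e. ?u e - ?v e) {e. A e (\<rho> 0)})"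
    unfolding transfer_op_def using h(2,3) r0 by (simp add: infsum_diff[OF su sv])
  also have "\<dots> \<le> (\<Sum>\<^sub>\<infinity>e\<in>{e. A e (\<rho> 0)}. K * ee * exp (sup_pot e))"
    by (rule infsum_norm_le_dominating(2)[OF _ tb])
       (rule summable_on_cmult_right[OF summable_exp_sup_pot_predecessors(1)[OF h(2)]])
  also have "\<dots> = K * ee * (\<Sum>\<^sub>\<infinity>e\<in>{e. A e (\<rho> 0)}. exp (sup_pot e))"
    by (rule infsum_cmult_right')
  also have "\<dots> \<le> K * ee * letter_sum"
    using summable_exp_sup_pot_predecessors(2)[OF h(2)] K0 by (intro mult_left_mono) (auto simp: ee_def)
  also have "\<dots> \<le> K * letter_sum * exp (- (\<alpha> * (real n - 1)))"
  proof -
    have "ee \<le> exp (- (\<alpha> * (real n - 1)))" unfolding ee_def using alpha_pos by simp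
    then have "K * letter_sum * ee \<le> K * letter_sum * exp (- (\<alpha> * (real n - 1)))"
      using K0 letter_sum_nonneg by (intro mult_left_mono) auto
    then show ?thesis by (simp add: ac_simps)
  qed
  finally show ?thesis .
qed

lemma transfer_op_in_holder_space:
  assumes s: "Re s = x" and G: "G \<in> V"
  shows "transfer_op A f s G \<in> V"
proof -
  obtain B where B: "0 \<le> B" "\<forall>\<tau>\<in>X. norm (G \<tau>) \<le> B"
    using holder_space_bounded[OF G] by metis
  obtain C where C: "0 \<le> C" "\<And>n \<rho> \<rho>'. n \<ge> 1 \<Longrightarrow> \<rho> \<in> X \<Longrightarrow> \<rho>' \<in> X \<Longrightarrow> (\<forall>i<n. \<rho> i = \<rho>' i) \<Longrightarrow>
              norm (G \<rho> - G \<rho>') \<le> C * exp (- (\<alpha> * (real n - 1)))"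
    using holder_typeD[OF holder_space_holder_type[OF G]] by metis
  have "norm (transfer_op A f s G \<tau>) \<le> B * letter_sum" if "\<tau> \<in> X" for \<tau>
  proof -
    have "norm (transfer_op A f s G \<tau>) \<le> ruelle (\<lambda>\<tau>. norm (G \<tau>)) \<tau>"
      by (rule transfer_op_summable_norm_le(2)[OF s that B(2)])
    also have "\<dots> \<le> B * letter_sum"
      using ruelle_summable_abs_le(2)[OF that, of "\<lambda>\<tau>. norm (G \<tau>)" B] B by simp
    finally show ?thesis .
  qed
  moreover have "holder_type A \<alpha> (transfer_op A f s G)"
    by (rule holder_typeI) (rule transfer_op_holder_estimate[OF s B C])
  ultimately show ?thesis
    by (intro holder_spaceI[where B = "B * letter_sum"]) (auto simp: transfer_op_outside)
qed

lemma of_real_in_holder_space_D: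
  assumes "(\<lambda>\<tau>. complex_of_real (v \<tau>)) \<in> V"
  shows "bounded_on_X v" and "holder_type A \<alpha> v" and "holder_type A \<alpha> (ruelle v)"
proof -
  obtain B where "\<forall>\<tau>\<in>X. norm (complex_of_real (v \<tau>)) \<le> B"
    using holder_space_bounded[OF assms] by metis
  then show bv: "bounded_on_X v" unfolding bounded_on_X_def by auto
  show "holder_type A \<alpha> v"
    using holder_space_holder_type[OF assms] by (simp add: holder_type_of_real_iff)
  have "transfer_op A f (complex_of_real x) (\<lambda>\<tau>. complex_of_real (v \<tau>)) \<in> V"
    by (rule transfer_op_in_holder_space[OF _ assms]) simp
  then show "holder_type A \<alpha> (ruelle v)"
    using holder_type_cong[OF _ holder_space_holder_type] transfer_op_of_real[OF _ bv]
    by (metis holder_type_of_real_iff)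
qed

section \<open>Eigenfunctions for eigenvalues of modulus \<open>e\<^sup>P\<^sup>(\<^sup>x\<^sup>)\<close>\<close>

definition "lam = exp Px"

lemma lam_pos: "lam > 0"
  by (simp add: lam_def)

lemma lam_pow_le_max_pow: "m \<le> n \<Longrightarrow> lam ^ m \<le> (max 1 lam) ^ n"
  using lam_pos order_trans[OF power_mono[of lam "max 1 lam" m] power_increasing[of m n "max 1 lam"]]
  by simp

lemma holder_type_lower_near:
  fixes h :: "(nat \<Rightarrow> 'e) \<Rightarrow> real"
  assumes "holder_type A \<alpha> h" and rs: "\<rho>s \<in> X" and pos: "h \<rho>s > 0"
  obtains N where "N \<ge> 1" and "\<forall>\<tau>\<in>X. (\<forall>i<N. \<tau> i = \<rho>s i) \<longrightarrow> h \<rho>s / 2 \<le> h \<tau>"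
proof -
  obtain C where C: "\<And>n \<rho> \<rho>'. n \<ge> 1 \<Longrightarrow> \<rho> \<in> X \<Longrightarrow> \<rho>' \<in> X \<Longrightarrow> (\<forall>i<n. \<rho> i = \<rho>' i) \<Longrightarrow>
              norm (h \<rho> - h \<rho>') \<le> C * exp (- (\<alpha> * (real n - 1)))"
    using holder_typeD[OF assms(1)] by metis
  obtain N where N: "N \<ge> 1" "C * exp (- (\<alpha> * (real N - 1))) \<le> h \<rho>s / 2"
    using exp_decay_eventually_le[OF alpha_pos, of "h \<rho>s / 2" C] pos by auto
  have "h \<rho>s / 2 \<le> h \<tau>" if "\<tau> \<in> X" "\<forall>i<N. \<tau> i = \<rho>s i" for \<tau>
    using C[OF N(1) that(1) rs that(2)] N(2) by simp
  with N(1) show thesis using that by blast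
qed

lemma birkhoff_sum_lower_abs:
  assumes "\<tau> \<in> cylinder A w"
  shows "- (\<Sum>j<length w. \<bar>sup_pot (w ! j) - \<bar>x\<bar> * Cf\<bar>) \<le> birkhoff_sum (length w) pot \<tau>"
proof -
  have "- (\<Sum>j<length w. \<bar>sup_pot (w ! j) - \<bar>x\<bar> * Cf\<bar>) \<le> (\<Sum>j<length w. sup_pot (w ! j) - \<bar>x\<bar> * Cf)"
    unfolding sum_negf[symmetric] by (rule sum_mono) simp
  also have "\<dots> \<le> birkhoff_sum (length w) pot \<tau>" by (rule birkhoff_sum_bounds(2)[OF assms])
  finally show ?thesis .
qed

definition "connector_len = sum length connectors"

text \<open>Irreducibility spreads positivity: every point is the image of a point of the
  \<open>N\<close>-cylinder around \<open>\<rho>s\<close> under at most \<open>N + connector_len\<close> shifts, along words whose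
  Birkhoff sums are bounded below.\<close>

lemma ruelle_pow_lower_bound:
  assumes nn: "\<forall>\<tau>\<in>X. 0 \<le> h \<tau>" and b: "bounded_on_X h" and rs: "\<rho>s \<in> X" and N: "N \<ge> 1"
    and d: "\<delta> > 0" and hd: "\<forall>\<tau>\<in>X. (\<forall>i<N. \<tau> i = \<rho>s i) \<longrightarrow> \<delta> \<le> h \<tau>"
  shows "\<exists>c>0. \<forall>\<tau>\<in>X. \<exists>m\<le>N + connector_len. c \<le> (ruelle ^^ m) h \<tau>"
proof -
  define u where "u = map \<rho>s [0..<N]"
  have lu: "length u = N" and une: "u \<noteq> []" using N by (auto simp: u_def)
  have uadm: "admissible_word A u"
    using rs by (intro cylinder_admissible_word[of \<rho>s]) (simp add: cylinder_def u_def)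
  define K where "K = (\<Sum>\<omega>\<in>connectors. \<Sum>j<length (u @ \<omega>). \<bar>sup_pot ((u @ \<omega>) ! j) - \<bar>x\<bar> * Cf\<bar>)"
  have "\<exists>m\<le>N + connector_len. \<delta> * exp (- K) \<le> (ruelle ^^ m) h \<tau>" if t: "\<tau> \<in> X" for \<tau>
  proof -
    obtain \<omega> where om: "\<omega> \<in> connectors" and oadm: "admissible_word A (last u # \<omega> @ [\<tau> 0])"
      using connectors(2) by blast
    define w where "w = u @ \<omega>"
    have "admissible_word A (w @ [\<tau> 0])"
      unfolding w_def using admissible_word_append[OF uadm une, of "\<omega> @ [\<tau> 0]"] oadm by simp
    then have pX: "prepend w \<tau> \<in> X" using t by (simp add: prepend_admissible_iff)
    have "\<forall>i<N. prepend w \<tau> i = \<rho>s i"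
      unfolding w_def using lu by (auto simp: prepend_def nth_append u_def)
    then have hpw: "\<delta> \<le> h (prepend w \<tau>)" using hd pX by blast
    have "(\<Sum>j<length w. \<bar>sup_pot (w ! j) - \<bar>x\<bar> * Cf\<bar>) \<le> K"
      unfolding K_def w_def
      by (rule member_le_sum[of \<omega> connectors "\<lambda>\<omega>. \<Sum>j<length (u @ \<omega>). \<bar>sup_pot ((u @ \<omega>) ! j) - \<bar>x\<bar> * Cf\<bar>"])
         (use om connectors(1) in auto)
    then have "- K \<le> birkhoff_sum (length w) pot (prepend w \<tau>)"
      using birkhoff_sum_lower_abs[OF prepend_in_cylinder[OF pX]] by linarith
    then have "\<delta> * exp (- K) \<le> exp (birkhoff_sum (length w) pot (prepend w \<tau>)) * h (prepend w \<tau>)"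
      using hpw d by (simp add: mult.commute mult_mono)
    also have "\<dots> \<le> (ruelle ^^ length w) h \<tau>" by (rule ruelle_pow_word_le[OF nn b t pX])
    finally have "\<delta> * exp (- K) \<le> (ruelle ^^ length w) h \<tau>" .
    moreover have "length \<omega> \<le> connector_len"
      unfolding connector_len_def by (rule member_le_sum) (use om connectors(1) in auto)
    then have "length w \<le> N + connector_len" unfolding w_def using lu by simp
    ultimately show ?thesis by blast
  qed
  moreover have "\<delta> * exp (- K) > 0" using d by simp
  ultimately show ?thesis by blast
qed

lemma ruelle_pow_eq_defect_sum:
  assumes bv: "bounded_on_X v" and bD: "bounded_on_X D"
    and RvD: "\<forall>\<tau>\<in>X. ruelle v \<tau> = lam * (v \<tau> + D \<tau>)"
  shows "\<forall>\<tau>\<in>X. (ruelle ^^ n) v \<tau> = lam ^ n * (v \<tau> + (\<Sum>i<n. (ruelle ^^ i) D \<tau> / lam ^ i))"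
proof (induction n)
  case (Suc n)
  show ?case
  proof
    fix \<tau> assume t: "\<tau> \<in> X"
    have "(ruelle ^^ Suc n) v \<tau> = (ruelle ^^ n) (ruelle v) \<tau>"
      by (simp add: funpow_Suc_right del: funpow.simps)
    also have "\<dots> = (ruelle ^^ n) (\<lambda>\<tau>. lam * (v \<tau> + D \<tau>)) \<tau>"
      using ruelle_pow_cong[of "ruelle v" "\<lambda>\<tau>. lam * (v \<tau> + D \<tau>)" n] RvD t by auto
    also have "\<dots> = lam * ((ruelle ^^ n) v \<tau> + (ruelle ^^ n) D \<tau>)"
      using ruelle_pow_add[OF bv bD, of n] t by (simp add: ruelle_pow_cmult)
    also have "\<dots> = lam ^ Suc n * (v \<tau> + (\<Sum>i<Suc n. (ruelle ^^ i) D \<tau> / lam ^ i))"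
      using Suc t lam_pos by (simp add: field_simps)
    finally show "(ruelle ^^ Suc n) v \<tau> = lam ^ Suc n * (v \<tau> + (\<Sum>i<Suc n. (ruelle ^^ i) D \<tau> / lam ^ i))" .
  qed
qed simp

lemma ruelle_pow_supersolution_iterate:
  assumes bv: "bounded_on_X v" and q: "q > 0" and super: "\<forall>\<tau>\<in>X. q * v \<tau> \<le> (ruelle ^^ M) v \<tau>"
  shows "\<forall>\<tau>\<in>X. q ^ k * v \<tau> \<le> (ruelle ^^ (k * M)) v \<tau>"
proof (induction k)
  case (Suc k)
  show ?case
  proof
    fix \<tau> assume t: "\<tau> \<in> X"
    have bq: "bounded_on_X (\<lambda>\<tau>. q * v \<tau>)"
      using bv q unfolding bounded_on_X_def by (metis abs_mult mult_left_mono abs_ge_zero)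
    have "q ^ Suc k * v \<tau> \<le> q * (ruelle ^^ (k * M)) v \<tau>"
      using Suc t q by (simp add: mult.assoc mult_left_mono)
    also have "\<dots> = (ruelle ^^ (k * M)) (\<lambda>\<tau>. q * v \<tau>) \<tau>" by (simp add: ruelle_pow_cmult)
    also have "\<dots> \<le> (ruelle ^^ (k * M)) ((ruelle ^^ M) v) \<tau>"
      using ruelle_pow_mono[OF bq bounded_on_X_ruelle_pow[OF bv] super] t by blast
    also have "\<dots> = (ruelle ^^ (Suc k * M)) v \<tau>"
      by (simp only: mult_Suc add.commute[of M] funpow_add comp_apply)
    finally show "q ^ Suc k * v \<tau> \<le> (ruelle ^^ (Suc k * M)) v \<tau>" .
  qed
qed simp

lemma geometric_le_Z_imp_le_lam_pow:
  assumes c: "c > 0" and q: "q > 0" and M: "M \<ge> 1" and le: "\<And>k. q ^ k * c \<le> Z (k * M)"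
  shows "q \<le> lam ^ M"
proof -
  have lower: "ln q / real M + ln c / real M / real k \<le> ln (Z (k * M)) / real (k * M)"
    if k: "k \<ge> 1" for k
  proof -
    have "real k * ln q + ln c = ln (q ^ k * c)" using q c by (simp add: ln_mult ln_realpow)
    also have "\<dots> \<le> ln (Z (k * M))" using le[of k] q c Z_pos by (simp add: ln_le_cancel_iff)
    finally have "(real k * ln q + ln c) / real (k * M) \<le> ln (Z (k * M)) / real (k * M)"
      by (rule divide_right_mono) simp
    moreover have "(real k * ln q + ln c) / real (k * M) = ln q / real M + ln c / real M / real k"
      using k M by (simp add: field_simps)
    ultimately show ?thesis by simp
  qed
  have "(\<lambda>k. ln (Z (k * M)) / real (k * M)) \<longlonglongrightarrow> Px"
    using LIMSEQ_subseq_LIMSEQ[OF ln_Z_tendsto, of "\<lambda>k. k * M"] M by (simp add: strict_mono_def o_def)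
  moreover have "(\<lambda>k. ln q / real M + ln c / real M / real k) \<longlonglongrightarrow> ln q / real M + 0"
    by (intro tendsto_add tendsto_const lim_const_over_n)
  ultimately have "ln q / real M \<le> Px"
    using lower by (intro LIMSEQ_le[of _ _ _ Px]) (auto simp: field_simps intro!: exI[of _ 1])
  then have "ln q \<le> real M * Px" using M by (simp add: field_simps)
  then have "exp (ln q) \<le> exp (real M * Px)" by simp
  then show ?thesis using q by (simp add: lam_def exp_of_nat_mult)
qed

lemma ruelle_supersolution_le_lam_pow:
  assumes bv: "bounded_on_X v" and vnn: "\<forall>\<tau>\<in>X. 0 \<le> v \<tau>" and r1: "\<rho>1 \<in> X" "v \<rho>1 > 0"
    and M: "M \<ge> 1" and q: "q > 0" and super: "\<forall>\<tau>\<in>X. q * v \<tau> \<le> (ruelle ^^ M) v \<tau>"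
  shows "q \<le> lam ^ M"
proof -
  obtain B where B: "\<forall>\<tau>\<in>X. \<bar>v \<tau>\<bar> \<le> B" using bv unfolding bounded_on_X_def by blast
  then have B0: "B > 0" using r1 by force
  have grow: "q ^ k * (v \<rho>1 / B) \<le> Z (k * M)" for k
  proof -
    have "q ^ k * v \<rho>1 \<le> (ruelle ^^ (k * M)) v \<rho>1"
      using ruelle_pow_supersolution_iterate[OF bv q super] r1 by blast
    also have "\<dots> \<le> (ruelle ^^ (k * M)) (\<lambda>\<tau>. B * 1) \<rho>1"
    proof -
      have "bounded_on_X (\<lambda>\<tau>. B * 1)" unfolding bounded_on_X_def by auto
      moreover have "\<forall>\<tau>\<in>X. v \<tau> \<le> B * 1" using B by (auto simp: abs_le_iff)
      ultimately show ?thesis using ruelle_pow_mono[OF bv] r1 by blast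
    qed
    also have "\<dots> \<le> B * Z (k * M)"
      using ruelle_pow_one_le_Z[OF r1(1)] B0 by (simp add: ruelle_pow_cmult[of _ B "\<lambda>_. 1", simplified])
    finally show ?thesis using B0 by (simp add: field_simps)
  qed
  show ?thesis by (rule geometric_le_Z_imp_le_lam_pow[OF _ q M grow]) (use r1 B0 in simp)
qed

lemma ruelle_pow_gain_from_defect:
  assumes bv: "bounded_on_X v" and vnn: "\<forall>\<tau>\<in>X. 0 \<le> v \<tau>" and Bv: "\<forall>\<tau>\<in>X. \<bar>v \<tau>\<bar> \<le> Bv"
    and bD: "bounded_on_X D" and Dnn: "\<forall>\<tau>\<in>X. 0 \<le> D \<tau>"
    and RvD: "\<forall>\<tau>\<in>X. ruelle v \<tau> = lam * (v \<tau> + D \<tau>)"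
    and c0: "c > 0" and reach: "\<forall>\<tau>\<in>X. \<exists>m\<le>K. c \<le> (ruelle ^^ m) D \<tau>" and Bv0: "Bv > 0"
  defines "\<eta> \<equiv> c / max 1 lam ^ Suc K / Bv"
  shows "\<forall>\<tau>\<in>X. lam ^ Suc K * (1 + \<eta>) * v \<tau> \<le> (ruelle ^^ Suc K) v \<tau>"
proof
  fix \<tau> assume t: "\<tau> \<in> X"
  obtain m where m: "m \<le> K" and cm: "c \<le> (ruelle ^^ m) D \<tau>" using reach t by blast
  have "\<eta> * v \<tau> \<le> c / max 1 lam ^ Suc K"
    using Bv t vnn Bv0 c0 unfolding \<eta>_def by (simp add: field_simps mult_left_le)
  also have "\<dots> \<le> c / lam ^ m"
    using lam_pow_le_max_pow[of m "Suc K"] m c0 lam_pos by (intro divide_left_mono) auto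
  also have "\<dots> \<le> (ruelle ^^ m) D \<tau> / lam ^ m" using cm lam_pos by (simp add: divide_right_mono)
  also have "\<dots> \<le> (\<Sum>i<Suc K. (ruelle ^^ i) D \<tau> / lam ^ i)"
    using m ruelle_pow_nonneg[OF Dnn] t lam_pos by (intro member_le_sum) auto
  finally have "(1 + \<eta>) * v \<tau> \<le> v \<tau> + (\<Sum>i<Suc K. (ruelle ^^ i) D \<tau> / lam ^ i)"
    by (simp add: algebra_simps)
  from mult_left_mono[OF this, of "lam ^ Suc K"]
  have "lam ^ Suc K * ((1 + \<eta>) * v \<tau>) \<le> lam ^ Suc K * (v \<tau> + (\<Sum>i<Suc K. (ruelle ^^ i) D \<tau> / lam ^ i))"
    using lam_pos by simp
  moreover have "(ruelle ^^ Suc K) v \<tau> = lam ^ Suc K * (v \<tau> + (\<Sum>i<Suc K. (ruelle ^^ i) D \<tau> / lam ^ i))"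
    using ruelle_pow_eq_defect_sum[OF bv bD RvD] t by blast
  ultimately show "lam ^ Suc K * (1 + \<eta>) * v \<tau> \<le> (ruelle ^^ Suc K) v \<tau>"
    by (simp only: mult.assoc)
qed

lemma ruelle_subinvariant_imp_invariant:
  assumes vV: "(\<lambda>\<tau>. complex_of_real (v \<tau>)) \<in> V" and vnn: "\<forall>\<tau>\<in>X. 0 \<le> v \<tau>"
    and r1: "\<rho>1 \<in> X" "v \<rho>1 > 0" and sub: "\<forall>\<rho>\<in>X. lam * v \<rho> \<le> ruelle v \<rho>"
  shows "\<forall>\<rho>\<in>X. ruelle v \<rho> = lam * v \<rho>"
proof (rule ccontr)
  assume "\<not> (\<forall>\<rho>\<in>X. ruelle v \<rho> = lam * v \<rho>)"
  then obtain \<rho>s where rs: "\<rho>s \<in> X" and ne: "ruelle v \<rho>s \<noteq> lam * v \<rho>s" by blast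
  note bv = of_real_in_holder_space_D(1)[OF vV]
  obtain Bv where Bv: "\<forall>\<tau>\<in>X. \<bar>v \<tau>\<bar> \<le> Bv" using bv unfolding bounded_on_X_def by blast
  then have Bv0: "Bv > 0" using r1 by force
  define D where "D \<tau> = inverse lam * ruelle v \<tau> + (- 1) * v \<tau>" for \<tau>
  have Dnn: "\<forall>\<tau>\<in>X. 0 \<le> D \<tau>" and Dpos: "D \<rho>s > 0"
    using sub ne rs lam_pos by (auto simp: D_def field_simps)
  have RvD: "\<forall>\<tau>\<in>X. ruelle v \<tau> = lam * (v \<tau> + D \<tau>)" using lam_pos by (simp add: D_def field_simps)
  have "\<bar>D \<tau>\<bar> \<le> inverse lam * (Bv * letter_sum) + Bv" if "\<tau> \<in> X" for \<tau>
  proof -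
    have "\<bar>D \<tau>\<bar> \<le> inverse lam * \<bar>ruelle v \<tau>\<bar> + \<bar>v \<tau>\<bar>"
      using abs_triangle_ineq4[of "inverse lam * ruelle v \<tau>" "v \<tau>"] lam_pos by (simp add: D_def abs_mult)
    also have "\<dots> \<le> inverse lam * (Bv * letter_sum) + Bv"
      using ruelle_summable_abs_le(2)[OF that Bv] Bv that lam_pos by (intro add_mono mult_left_mono) auto
    finally show ?thesis .
  qed
  then have bD: "bounded_on_X D" unfolding bounded_on_X_def by blast
  have "holder_type A \<alpha> D"
    unfolding D_def by (intro holder_type_lincomb of_real_in_holder_space_D[OF vV])
  then obtain N where N: "N \<ge> 1" and near: "\<forall>\<tau>\<in>X. (\<forall>i<N. \<tau> i = \<rho>s i) \<longrightarrow> D \<rho>s / 2 \<le> D \<tau>"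
    using holder_type_lower_near rs Dpos by metis
  obtain c where c0: "c > 0" and reach: "\<forall>\<tau>\<in>X. \<exists>m\<le>N + connector_len. c \<le> (ruelle ^^ m) D \<tau>"
    using ruelle_pow_lower_bound[OF Dnn bD rs N _ near] Dpos by auto
  define \<eta> where "\<eta> = c / max 1 lam ^ Suc (N + connector_len) / Bv"
  have "\<eta> > 0" unfolding \<eta>_def using c0 Bv0 by simp
  moreover have "lam ^ Suc (N + connector_len) * (1 + \<eta>) \<le> lam ^ Suc (N + connector_len)"
    using ruelle_pow_gain_from_defect[OF bv vnn Bv bD Dnn RvD c0 reach Bv0] lam_pos \<open>\<eta> > 0\<close>
    unfolding \<eta>_def[symmetric] by (intro ruelle_supersolution_le_lam_pow[OF bv vnn r1]) auto
  ultimately show False using lam_pos by simp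
qed

lemma ruelle_invariant_lower_bound:
  assumes vV: "(\<lambda>\<tau>. complex_of_real (v \<tau>)) \<in> V" and vnn: "\<forall>\<tau>\<in>X. 0 \<le> v \<tau>"
    and r1: "\<rho>1 \<in> X" "v \<rho>1 > 0" and inv: "\<forall>\<rho>\<in>X. ruelle v \<rho> = lam * v \<rho>"
  shows "\<exists>\<delta>>0. \<forall>\<rho>\<in>X. \<delta> \<le> v \<rho>"
proof -
  obtain N where N: "N \<ge> 1" and near: "\<forall>\<tau>\<in>X. (\<forall>i<N. \<tau> i = \<rho>1 i) \<longrightarrow> v \<rho>1 / 2 \<le> v \<tau>"
    using holder_type_lower_near[OF of_real_in_holder_space_D(2)[OF vV] r1] by metis
  obtain c where c0: "c > 0" and reach: "\<forall>\<tau>\<in>X. \<exists>m\<le>N + connector_len. c \<le> (ruelle ^^ m) v \<tau>"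
    using ruelle_pow_lower_bound[OF vnn of_real_in_holder_space_D(1)[OF vV] r1(1) N _ near] r1 by auto
  define L where "L = max 1 lam"
  have "c / L ^ (N + connector_len) \<le> v \<tau>" if t: "\<tau> \<in> X" for \<tau>
  proof -
    obtain m where m: "m \<le> N + connector_len" and cm: "c \<le> (ruelle ^^ m) v \<tau>" using reach t by blast
    have "lam ^ m \<le> L ^ (N + connector_len)" unfolding L_def by (rule lam_pow_le_max_pow[OF m])
    then have "c \<le> L ^ (N + connector_len) * v \<tau>"
      using cm ruelle_pow_eigen[OF inv] vnn t by (metis mult_right_mono order_trans)
    then show ?thesis unfolding L_def by (simp add: field_simps)
  qed
  moreover have "c / L ^ (N + connector_len) > 0" unfolding L_def using c0 by simp
  ultimately show ?thesis by blast
qed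

lemma peripheral_eigenfunction:
  assumes s: "Re s = x" and \<phi>V: "\<phi> \<in> V" and nz: "\<exists>\<rho>\<in>X. \<phi> \<rho> \<noteq> 0"
    and eig: "\<forall>\<rho>\<in>X. transfer_op A f s \<phi> \<rho> = \<mu> * \<phi> \<rho>" and mu: "cmod \<mu> = lam"
  shows "\<forall>\<rho>\<in>X. ruelle (\<lambda>\<tau>. cmod (\<phi> \<tau>)) \<rho> = lam * cmod (\<phi> \<rho>)"
    and "\<exists>\<delta>>0. \<forall>\<rho>\<in>X. \<delta> \<le> cmod (\<phi> \<rho>)"
proof -
  obtain B where B: "\<forall>\<tau>\<in>X. norm (\<phi> \<tau>) \<le> B" using holder_space_bounded[OF \<phi>V] by metis
  note vV = holder_space_norm[OF \<phi>V]
  obtain \<rho>1 where r1: "\<rho>1 \<in> X" "cmod (\<phi> \<rho>1) > 0" using nz by auto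
  have "lam * cmod (\<phi> \<rho>) \<le> ruelle (\<lambda>\<tau>. cmod (\<phi> \<tau>)) \<rho>" if "\<rho> \<in> X" for \<rho>
    using transfer_op_summable_norm_le(2)[OF s that B] eig that mu by (simp add: norm_mult)
  then show inv: "\<forall>\<rho>\<in>X. ruelle (\<lambda>\<tau>. cmod (\<phi> \<tau>)) \<rho> = lam * cmod (\<phi> \<rho>)"
    using ruelle_subinvariant_imp_invariant[OF vV _ r1] by simp
  show "\<exists>\<delta>>0. \<forall>\<rho>\<in>X. \<delta> \<le> cmod (\<phi> \<rho>)"
    by (rule ruelle_invariant_lower_bound[OF vV _ r1 inv]) simp
qed

section \<open>Finiteness and simplicity of the peripheral eigenvalues\<close>

lemma eigenfunction_phase_step:
  assumes s: "Re s = x" and \<phi>V: "\<phi> \<in> V" and nz: "\<exists>\<rho>\<in>X. \<phi> \<rho> \<noteq> 0"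
    and eig: "\<forall>\<rho>\<in>X. transfer_op A f s \<phi> \<rho> = \<mu> * \<phi> \<rho>" and mu: "cmod \<mu> = lam"
    and r: "\<rho> \<in> X" and e: "A e (\<rho> 0)"
  shows "sgn (exp (s * complex_of_real (f (seq_cons e \<rho>)))) * sgn (\<phi> (seq_cons e \<rho>)) = sgn \<mu> * sgn (\<phi> \<rho>)"
proof -
  note per = peripheral_eigenfunction[OF s \<phi>V nz eig mu]
  obtain \<delta> where d0: "\<delta> > 0" and dl: "\<forall>\<rho>\<in>X. \<delta> \<le> cmod (\<phi> \<rho>)" using per(2) by blast
  obtain B where "\<forall>\<tau>\<in>X. norm (\<phi> \<tau>) \<le> B" using holder_space_bounded[OF \<phi>V] by metis
  then have bv: "bounded_on_X (\<lambda>\<tau>. cmod (\<phi> \<tau>))" unfolding bounded_on_X_def by auto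
  define z where "z e = exp (s * complex_of_real (f (seq_cons e \<rho>))) * \<phi> (seq_cons e \<rho>)" for e
  have nze: "norm (z e) = exp (pot (seq_cons e \<rho>)) * cmod (\<phi> (seq_cons e \<rho>))" for e
    unfolding z_def norm_mult norm_exp_sf[OF s] ..
  have sn: "(\<lambda>e. norm (z e)) summable_on {e. A e (\<rho> 0)}"
    unfolding nze by (rule ruelle_summable[OF r bv])
  have Tz: "infsum z {e. A e (\<rho> 0)} = \<mu> * \<phi> \<rho>"
    using eig r unfolding transfer_op_def z_def by simp
  have "norm (infsum z {e. A e (\<rho> 0)}) = infsum (\<lambda>e. norm (z e)) {e. A e (\<rho> 0)}"
    using per(1) r mu unfolding Tz nze ruelle_def by (simp add: norm_mult)
  moreover have "z e \<noteq> 0"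
    using dl d0 seq_cons_admissible[OF r e] unfolding z_def by fastforce
  ultimately have "sgn (z e) = sgn (\<mu> * \<phi> \<rho>)"
    using infsum_norm_eq_imp_sgn_eq[OF sn _ _] e Tz by fastforce
  then show ?thesis unfolding z_def by (simp add: sgn_mult)
qed

lemma eigenvalue_sgn_power_period:
  assumes s: "Re s = x" and \<phi>V: "\<phi> \<in> V" and nz: "\<exists>\<rho>\<in>X. \<phi> \<rho> \<noteq> 0"
    and eig: "\<forall>\<rho>\<in>X. transfer_op A f s \<phi> \<rho> = \<mu> * \<phi> \<rho>" and mu: "cmod \<mu> = lam"
  shows "sgn \<mu> ^ period = (\<Prod>j<period. sgn (exp (s * complex_of_real (f ((shift ^^ j) periodic_pt)))))"
proof -
  let ?b = "\<lambda>j. sgn (exp (s * complex_of_real (f ((shift ^^ j) periodic_pt))))"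
  have telescope: "(\<Prod>j<k. ?b j) * sgn (\<phi> periodic_pt) = sgn \<mu> ^ k * sgn (\<phi> ((shift ^^ k) periodic_pt))" for k
  proof (induction k)
    case (Suc k)
    have "A (periodic_pt k) ((shift ^^ Suc k) periodic_pt 0)"
      using periodic_pt_admissible unfolding admissible_seqs_def funpow_shift by simp
    from eigenfunction_phase_step[OF s \<phi>V nz eig mu
        funpow_shift_admissible[OF periodic_pt_admissible] this]
    have step: "?b k * sgn (\<phi> ((shift ^^ k) periodic_pt)) = sgn \<mu> * sgn (\<phi> ((shift ^^ Suc k) periodic_pt))"
      unfolding funpow_shift_seq_cons[of k periodic_pt, symmetric] .
    have "(\<Prod>j<Suc k. ?b j) * sgn (\<phi> periodic_pt) = ?b k * ((\<Prod>j<k. ?b j) * sgn (\<phi> periodic_pt))"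
      by (simp add: ac_simps)
    also have "\<dots> = sgn \<mu> ^ k * (?b k * sgn (\<phi> ((shift ^^ k) periodic_pt)))"
      unfolding Suc by (simp add: ac_simps)
    also have "\<dots> = sgn \<mu> ^ Suc k * sgn (\<phi> ((shift ^^ Suc k) periodic_pt))"
      unfolding step by (simp add: ac_simps del: funpow.simps)
    finally show ?case .
  qed simp
  obtain \<delta> where "\<delta> > 0" and "\<forall>\<rho>\<in>X. \<delta> \<le> cmod (\<phi> \<rho>)"
    using peripheral_eigenfunction(2)[OF s \<phi>V nz eig mu] by blast
  then have "sgn (\<phi> periodic_pt) \<noteq> 0" using periodic_pt_admissible by (force simp: sgn_zero_iff)
  then show ?thesis using telescope[of period] by (simp add: funpow_shift_period)
qed

lemma finite_peripheral_eigenvalues: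
  assumes s: "Re s = x"
  shows "finite {\<mu>. cmod \<mu> = lam \<and> is_eigenvalue_on V A (transfer_op A f s) \<mu>}"
proof -
  define c where "c = (\<Prod>j<period. sgn (exp (s * complex_of_real (f ((shift ^^ j) periodic_pt)))))"
  have "{\<mu>. cmod \<mu> = lam \<and> is_eigenvalue_on V A (transfer_op A f s) \<mu>}
      \<subseteq> (\<lambda>\<gamma>. complex_of_real lam * \<gamma>) ` {\<gamma>. \<gamma> ^ period = c}"
  proof
    fix \<mu> assume "\<mu> \<in> {\<mu>. cmod \<mu> = lam \<and> is_eigenvalue_on V A (transfer_op A f s) \<mu>}"
    then obtain \<phi> where mu: "cmod \<mu> = lam" and \<phi>V: "\<phi> \<in> V" and ne: "\<phi> \<noteq> (\<lambda>_. 0)"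
      and eig: "\<forall>\<rho>\<in>X. transfer_op A f s \<phi> \<rho> = \<mu> * \<phi> \<rho>"
      unfolding is_eigenvalue_on_def op_minus_scalar_eq_0_iff by blast
    have "\<exists>\<rho>\<in>X. \<phi> \<rho> \<noteq> 0" using ne holder_space_zero[OF \<phi>V] by fastforce
    then have "sgn \<mu> ^ period = c"
      unfolding c_def by (rule eigenvalue_sgn_power_period[OF s \<phi>V _ eig mu])
    moreover have "\<mu> = complex_of_real lam * sgn \<mu>" using mu lam_pos by (simp add: sgn_eq)
    ultimately show "\<mu> \<in> (\<lambda>\<gamma>. complex_of_real lam * \<gamma>) ` {\<gamma>. \<gamma> ^ period = c}" by blast
  qed
  moreover have "finite {\<gamma>. \<gamma> ^ period = c}" by (rule finite_nth_roots[OF period_pos])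
  ultimately show ?thesis by (meson finite_imageI finite_subset)
qed

lemma peripheral_eigenfunctions_proportional:
  assumes s: "Re s = x" and \<phi>1: "\<phi>1 \<in> V" and \<phi>2: "\<phi>2 \<in> V" and nz: "\<exists>\<rho>\<in>X. \<phi>1 \<rho> \<noteq> 0"
    and e1: "\<forall>\<rho>\<in>X. transfer_op A f s \<phi>1 \<rho> = \<mu> * \<phi>1 \<rho>"
    and e2: "\<forall>\<rho>\<in>X. transfer_op A f s \<phi>2 \<rho> = \<mu> * \<phi>2 \<rho>" and mu: "cmod \<mu> = lam"
  shows "\<exists>c. \<phi>2 = (\<lambda>\<rho>. c * \<phi>1 \<rho>)"
proof -
  obtain \<delta> where "\<delta> > 0" and "\<forall>\<rho>\<in>X. \<delta> \<le> cmod (\<phi>1 \<rho>)"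
    using peripheral_eigenfunction(2)[OF s \<phi>1 nz e1 mu] by blast
  then have p0: "\<phi>1 periodic_pt \<noteq> 0" using periodic_pt_admissible by force
  define c where "c = \<phi>2 periodic_pt / \<phi>1 periodic_pt"
  define \<psi> where "\<psi> = (\<lambda>\<tau>. 1 * \<phi>2 \<tau> + (- c) * \<phi>1 \<tau>)"
  have \<psi>V: "\<psi> \<in> V" unfolding \<psi>_def by (rule holder_space_lincomb[OF \<phi>2 \<phi>1])
  obtain B1 B2 where B1: "\<forall>\<tau>\<in>X. norm (\<phi>1 \<tau>) \<le> B1" and B2: "\<forall>\<tau>\<in>X. norm (\<phi>2 \<tau>) \<le> B2"
    using holder_space_bounded \<phi>1 \<phi>2 by metis
  have e\<psi>: "\<forall>\<rho>\<in>X. transfer_op A f s \<psi> \<rho> = \<mu> * \<psi> \<rho>"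
    unfolding \<psi>_def transfer_op_lincomb[OF s B2 B1] using e1 e2 by (simp add: algebra_simps)
  have "\<psi> periodic_pt = 0" unfolding \<psi>_def c_def using p0 by simp
  then have "\<not> (\<exists>\<delta>>0. \<forall>\<rho>\<in>X. \<delta> \<le> cmod (\<psi> \<rho>))" using periodic_pt_admissible by force
  then have "\<forall>\<rho>\<in>X. \<psi> \<rho> = 0" using peripheral_eigenfunction(2)[OF s \<psi>V _ e\<psi> mu] by blast
  then have "\<psi> \<rho> = 0" for \<rho> using holder_space_zero[OF \<psi>V] by (cases "\<rho> \<in> X") auto
  then have "\<phi>2 = (\<lambda>\<rho>. c * \<phi>1 \<rho>)" unfolding \<psi>_def by (auto simp: fun_eq_iff algebra_simps)
  then show ?thesis by blast
qed

lemma transfer_pow_in_holder_space: "Re s = x \<Longrightarrow> G \<in> V \<Longrightarrow> (transfer_op A f s ^^ n) G \<in> V"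
  by (induction n) (auto intro: transfer_op_in_holder_space)

lemma norm_transfer_pow_le_ruelle_pow:
  assumes s: "Re s = x" and G: "G \<in> V"
  shows "\<forall>\<rho>\<in>X. cmod ((transfer_op A f s ^^ n) G \<rho>) \<le> (ruelle ^^ n) (\<lambda>\<tau>. cmod (G \<tau>)) \<rho>"
proof (induction n)
  case (Suc n)
  obtain B where B: "\<forall>\<tau>\<in>X. norm (G \<tau>) \<le> B" using holder_space_bounded[OF G] by metis
  then have bG: "bounded_on_X (\<lambda>\<tau>. cmod (G \<tau>))" unfolding bounded_on_X_def by auto
  show ?case
  proof
    fix \<rho> assume r: "\<rho> \<in> X"
    obtain Bn where Bn: "\<forall>\<tau>\<in>X. norm ((transfer_op A f s ^^ n) G \<tau>) \<le> Bn"
      using holder_space_bounded[OF transfer_pow_in_holder_space[OF s G]] by metis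
    then have "bounded_on_X (\<lambda>\<tau>. cmod ((transfer_op A f s ^^ n) G \<tau>))"
      unfolding bounded_on_X_def by auto
    then have "cmod ((transfer_op A f s ^^ Suc n) G \<rho>) \<le> ruelle ((ruelle ^^ n) (\<lambda>\<tau>. cmod (G \<tau>))) \<rho>"
      using transfer_op_summable_norm_le(2)[OF s r Bn] Suc r
      by (auto intro: order_trans ruelle_mono[OF r _ bounded_on_X_ruelle_pow[OF bG]])
    then show "cmod ((transfer_op A f s ^^ Suc n) G \<rho>) \<le> (ruelle ^^ Suc n) (\<lambda>\<tau>. cmod (G \<tau>)) \<rho>"
      by simp
  qed
qed simp

lemma transfer_pow_jordan_chain:
  assumes s: "Re s = x" and G: "G \<in> V" and \<phi>: "\<phi> \<in> V"
    and eig: "\<forall>\<rho>\<in>X. transfer_op A f s \<phi> \<rho> = \<mu> * \<phi> \<rho>"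
    and TG: "\<forall>\<rho>\<in>X. transfer_op A f s G \<rho> = \<mu> * G \<rho> + \<phi> \<rho>"
  shows "\<forall>\<rho>\<in>X. (transfer_op A f s ^^ n) G \<rho> = \<mu> ^ n * G \<rho> + of_nat n * \<mu> ^ (n - 1) * \<phi> \<rho>"
proof (induction n)
  case (Suc n)
  obtain BG B\<phi> where BG: "\<forall>\<tau>\<in>X. norm (G \<tau>) \<le> BG" and B\<phi>: "\<forall>\<tau>\<in>X. norm (\<phi> \<tau>) \<le> B\<phi>"
    using holder_space_bounded G \<phi> by metis
  show ?case
  proof
    fix \<rho> assume r: "\<rho> \<in> X"
    have "(transfer_op A f s ^^ Suc n) G \<rho>
        = transfer_op A f s (\<lambda>\<tau>. \<mu> ^ n * G \<tau> + (of_nat n * \<mu> ^ (n - 1)) * \<phi> \<tau>) \<rho>"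
      using Suc by (simp add: mult.assoc transfer_op_cong)
    also have "\<dots> = \<mu> ^ n * transfer_op A f s G \<rho> + (of_nat n * \<mu> ^ (n - 1)) * transfer_op A f s \<phi> \<rho>"
      by (rule transfer_op_lincomb[OF s BG B\<phi>])
    also have "\<dots> = \<mu> ^ Suc n * G \<rho> + (\<mu> ^ n + of_nat n * \<mu> ^ (n - 1) * \<mu>) * \<phi> \<rho>"
      using TG eig r by (simp add: algebra_simps)
    also have "\<mu> ^ n + of_nat n * \<mu> ^ (n - 1) * \<mu> = of_nat (Suc n) * \<mu> ^ (Suc n - 1)"
      by (cases n) (simp_all add: algebra_simps)
    finally show "(transfer_op A f s ^^ Suc n) G \<rho> = \<mu> ^ Suc n * G \<rho> + of_nat (Suc n) * \<mu> ^ (Suc n - 1) * \<phi> \<rho>" .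
  qed
qed simp

lemma ruelle_pow_le_lam_pow:
  assumes u: "bounded_on_X u" and inv: "\<forall>\<rho>\<in>X. ruelle u \<rho> = lam * u \<rho>"
    and d: "\<delta> > 0" "\<forall>\<rho>\<in>X. \<delta> \<le> u \<rho>" and Bu: "\<forall>\<rho>\<in>X. u \<rho> \<le> Bu"
    and h: "\<forall>\<rho>\<in>X. \<bar>h \<rho>\<bar> \<le> B"
  shows "\<forall>\<rho>\<in>X. (ruelle ^^ n) h \<rho> \<le> B / \<delta> * Bu * lam ^ n"
proof
  fix \<rho> assume r: "\<rho> \<in> X"
  have B0: "0 \<le> B" using h r by force
  have bh: "bounded_on_X h" unfolding bounded_on_X_def using h by blast
  have bu: "bounded_on_X (\<lambda>\<tau>. B / \<delta> * u \<tau>)"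
    using u B0 d(1) unfolding bounded_on_X_def by (metis abs_mult mult_left_mono abs_ge_zero)
  have "\<forall>\<tau>\<in>X. h \<tau> \<le> B / \<delta> * u \<tau>"
  proof
    fix \<tau> assume "\<tau> \<in> X"
    then have "h \<tau> \<le> B" using h by (auto simp: abs_le_iff)
    also have "B = B / \<delta> * \<delta>" using d(1) by simp
    also have "\<dots> \<le> B / \<delta> * u \<tau>" using d \<open>\<tau> \<in> X\<close> B0 by (intro mult_left_mono) auto
    finally show "h \<tau> \<le> B / \<delta> * u \<tau>" .
  qed
  then have "(ruelle ^^ n) h \<rho> \<le> (ruelle ^^ n) (\<lambda>\<tau>. B / \<delta> * u \<tau>) \<rho>"
    using ruelle_pow_mono[OF bh bu] r by blast
  also have "\<dots> = B / \<delta> * (lam ^ n * u \<rho>)"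
    unfolding ruelle_pow_cmult using ruelle_pow_eigen[OF inv] r by simp
  also have "\<dots> \<le> B / \<delta> * (Bu * lam ^ n)"
    using Bu r B0 d(1) lam_pos by (intro mult_left_mono) (auto simp: mult.commute)
  finally show "(ruelle ^^ n) h \<rho> \<le> B / \<delta> * Bu * lam ^ n" by (simp add: mult.assoc)
qed

lemma jordan_chain_linear_bound:
  assumes s: "Re s = x" and G: "G \<in> V" and \<phi>V: "\<phi> \<in> V" and nz: "\<exists>\<rho>\<in>X. \<phi> \<rho> \<noteq> 0"
    and eig: "\<forall>\<rho>\<in>X. transfer_op A f s \<phi> \<rho> = \<mu> * \<phi> \<rho>"
    and TG: "\<forall>\<rho>\<in>X. transfer_op A f s G \<rho> = \<mu> * G \<rho> + \<phi> \<rho>" and mu: "cmod \<mu> = lam"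
    and r: "\<rho> \<in> X"
  shows "\<exists>K. \<forall>m. real (Suc m) * cmod (\<phi> \<rho>) \<le> K"
proof -
  note per = peripheral_eigenfunction[OF s \<phi>V nz eig mu]
  obtain \<delta> where d: "\<delta> > 0" "\<forall>\<rho>\<in>X. \<delta> \<le> cmod (\<phi> \<rho>)" using per(2) by blast
  obtain BG where BG: "\<forall>\<tau>\<in>X. norm (G \<tau>) \<le> BG" using holder_space_bounded[OF G] by metis
  obtain B\<phi> where B\<phi>: "\<forall>\<tau>\<in>X. norm (\<phi> \<tau>) \<le> B\<phi>" using holder_space_bounded[OF \<phi>V] by metis
  have b\<phi>: "bounded_on_X (\<lambda>\<tau>. cmod (\<phi> \<tau>))" unfolding bounded_on_X_def using B\<phi> by auto
  have BG': "\<forall>\<tau>\<in>X. \<bar>cmod (G \<tau>)\<bar> \<le> BG" using BG by simp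
  have "real (Suc m) * cmod (\<phi> \<rho>) \<le> lam * (BG / \<delta> * B\<phi> + BG)" for m
  proof -
    have "of_nat (Suc m) * \<mu> ^ m * \<phi> \<rho> = (transfer_op A f s ^^ Suc m) G \<rho> - \<mu> ^ Suc m * G \<rho>"
      using transfer_pow_jordan_chain[OF s G \<phi>V eig TG, of "Suc m"] r by simp
    then have "real (Suc m) * lam ^ m * cmod (\<phi> \<rho>)
        = cmod ((transfer_op A f s ^^ Suc m) G \<rho> - \<mu> ^ Suc m * G \<rho>)"
      by (metis mu norm_mult norm_of_nat norm_power)
    then have "lam ^ m * (real (Suc m) * cmod (\<phi> \<rho>))
        = cmod ((transfer_op A f s ^^ Suc m) G \<rho> - \<mu> ^ Suc m * G \<rho>)"
      by (simp add: ac_simps)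
    also have "\<dots> \<le> cmod ((transfer_op A f s ^^ Suc m) G \<rho>) + cmod (\<mu> ^ Suc m * G \<rho>)"
      by (rule norm_triangle_ineq4)
    also have "cmod ((transfer_op A f s ^^ Suc m) G \<rho>) \<le> (ruelle ^^ Suc m) (\<lambda>\<tau>. cmod (G \<tau>)) \<rho>"
      using norm_transfer_pow_le_ruelle_pow[OF s G] r by blast
    also have "\<dots> \<le> BG / \<delta> * B\<phi> * lam ^ Suc m"
      using ruelle_pow_le_lam_pow[OF b\<phi> per(1) d B\<phi> BG'] r by blast
    also have "cmod (\<mu> ^ Suc m * G \<rho>) \<le> lam ^ Suc m * BG"
      using BG r lam_pos by (simp add: norm_mult norm_power mu mult_left_mono)
    also have "BG / \<delta> * B\<phi> * lam ^ Suc m + lam ^ Suc m * BG = lam ^ m * (lam * (BG / \<delta> * B\<phi> + BG))"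
      by (simp add: algebra_simps)
    finally show ?thesis using lam_pos by (simp add: mult_le_cancel_left_pos)
  qed
  then show ?thesis by blast
qed

lemma peripheral_no_jordan_block:
  assumes s: "Re s = x" and G: "G \<in> V" and mu: "cmod \<mu> = lam"
    and N2: "op_minus_scalar A (transfer_op A f s) \<mu> (op_minus_scalar A (transfer_op A f s) \<mu> G) = (\<lambda>_. 0)"
  shows "op_minus_scalar A (transfer_op A f s) \<mu> G = (\<lambda>_. 0)"
proof (rule ccontr)
  define \<phi> where "\<phi> = op_minus_scalar A (transfer_op A f s) \<mu> G"
  assume "op_minus_scalar A (transfer_op A f s) \<mu> G \<noteq> (\<lambda>_. 0)"
  then obtain \<rho> where "\<phi> \<rho> \<noteq> 0" unfolding \<phi>_def by (auto simp: fun_eq_iff)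
  moreover from this have "\<rho> \<in> X" unfolding \<phi>_def op_minus_scalar_def by (auto split: if_splits)
  ultimately have nz: "\<exists>\<rho>\<in>X. \<phi> \<rho> \<noteq> 0" by blast
  have "\<phi> = (\<lambda>\<rho>. 1 * transfer_op A f s G \<rho> + (- \<mu>) * G \<rho>)"
    unfolding \<phi>_def by (auto simp: op_minus_scalar_def transfer_op_outside holder_space_zero[OF G])
  then have \<phi>V: "\<phi> \<in> V"
    using holder_space_lincomb[OF transfer_op_in_holder_space[OF s G] G, where a = 1 and b = "- \<mu>"] by simp
  have eig: "\<forall>\<rho>\<in>X. transfer_op A f s \<phi> \<rho> = \<mu> * \<phi> \<rho>"
    using N2 unfolding \<phi>_def op_minus_scalar_eq_0_iff .
  have TG: "\<forall>\<rho>\<in>X. transfer_op A f s G \<rho> = \<mu> * G \<rho> + \<phi> \<rho>"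
    unfolding \<phi>_def op_minus_scalar_def by simp
  obtain \<delta> where d: "\<delta> > 0" "\<forall>\<rho>\<in>X. \<delta> \<le> cmod (\<phi> \<rho>)"
    using peripheral_eigenfunction(2)[OF s \<phi>V nz eig mu] by blast
  obtain K where K: "\<And>m. real (Suc m) * cmod (\<phi> periodic_pt) \<le> K"
    using jordan_chain_linear_bound[OF s G \<phi>V nz eig TG mu periodic_pt_admissible] by blast
  obtain m where "K / \<delta> < real m" using reals_Archimedean2 by blast
  then have "K < real m * \<delta>" using d(1) by (simp add: pos_divide_less_eq)
  moreover have "real m * \<delta> \<le> real (Suc m) * cmod (\<phi> periodic_pt)"
    using d periodic_pt_admissible by (intro mult_mono) auto
  ultimately show False using K[of m] by linarith
qed

lemma peripheral_gen_eigenspace: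
  assumes s: "Re s = x" and mu: "cmod \<mu> = lam"
  shows "G \<in> V \<Longrightarrow> (op_minus_scalar A (transfer_op A f s) \<mu> ^^ k) G = (\<lambda>_. 0) \<Longrightarrow>
    G = (\<lambda>_. 0) \<or> op_minus_scalar A (transfer_op A f s) \<mu> G = (\<lambda>_. 0)"
proof (induction k arbitrary: G)
  case (Suc k)
  let ?N = "op_minus_scalar A (transfer_op A f s) \<mu>"
  have NV: "?N G \<in> V"
  proof -
    have "?N G = (\<lambda>\<rho>. 1 * transfer_op A f s G \<rho> + (- \<mu>) * G \<rho>)"
      by (auto simp: op_minus_scalar_def transfer_op_outside holder_space_zero[OF Suc.prems(1)])
    then show ?thesis
      using holder_space_lincomb[OF transfer_op_in_holder_space[OF s Suc.prems(1)] Suc.prems(1),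
          where a = 1 and b = "- \<mu>"] by simp
  qed
  have "(?N ^^ k) (?N G) = (\<lambda>_. 0)"
    using Suc.prems(2) by (simp add: funpow_Suc_right del: funpow.simps)
  then have "?N G = (\<lambda>_. 0) \<or> ?N (?N G) = (\<lambda>_. 0)" using Suc.IH NV by blast
  then show ?case using peripheral_no_jordan_block[OF s Suc.prems(1) mu] by blast
qed simp

lemma peripheral_alg_mult_one:
  assumes s: "Re s = x" and mu: "cmod \<mu> = lam" and ev: "is_eigenvalue_on V A (transfer_op A f s) \<mu>"
  shows "alg_mult_one V A (transfer_op A f s) \<mu>"
proof -
  obtain \<phi> where \<phi>V: "\<phi> \<in> V" and ne: "\<phi> \<noteq> (\<lambda>_. 0)"
    and N0: "op_minus_scalar A (transfer_op A f s) \<mu> \<phi> = (\<lambda>_. 0)"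
    using ev unfolding is_eigenvalue_on_def by blast
  have nz: "\<exists>\<rho>\<in>X. \<phi> \<rho> \<noteq> 0" using ne holder_space_zero[OF \<phi>V] by fastforce
  have "\<phi> \<in> gen_eigenspace V A (transfer_op A f s) \<mu>"
    unfolding gen_eigenspace_def using \<phi>V N0 by (auto intro!: exI[of _ 1])
  moreover have "\<exists>c. G = (\<lambda>\<rho>. c * \<phi> \<rho>)" if "G \<in> gen_eigenspace V A (transfer_op A f s) \<mu>" for G
  proof -
    from that obtain k where GV: "G \<in> V"
      and "(op_minus_scalar A (transfer_op A f s) \<mu> ^^ k) G = (\<lambda>_. 0)"
      unfolding gen_eigenspace_def by blast
    then consider "G = (\<lambda>_. 0)" | "op_minus_scalar A (transfer_op A f s) \<mu> G = (\<lambda>_. 0)"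
      using peripheral_gen_eigenspace[OF s mu] by blast
    then show ?thesis
    proof cases
      case 1
      then show ?thesis by (intro exI[of _ 0]) simp
    next
      case 2
      then show ?thesis
        using peripheral_eigenfunctions_proportional[OF s \<phi>V GV nz] N0 mu
        unfolding op_minus_scalar_eq_0_iff by blast
    qed
  qed
  ultimately show ?thesis unfolding alg_mult_one_def using ne by blast
qed

end

theorem mainTheorem4:
  fixes A :: "'e::countable \<Rightarrow> 'e \<Rightarrow> bool"
    and f :: "(nat \<Rightarrow> 'e) \<Rightarrow> real"
    and \<alpha> x y :: real
  assumes irr: "finitely_irreducible A"
    and alpha_pos: "\<alpha> > 0"
    and summ: "summable_pot A f"
    and sreg: "strongly_regular A f"
    and hold: "holder_type A \<alpha> f"
    and P0: "pressure A f = 0"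
    and x_Gamma: "x \<in> Gamma_set A f"
  shows "finite {\<mu>. cmod \<mu> = exp (real_of_ereal (pressure A (\<lambda>\<rho>. x * f \<rho>))) \<and>
                    is_eigenvalue_on (holder_space A \<alpha>) A (transfer_op A f (Complex x y)) \<mu>}
       \<and> (\<forall>\<mu>. cmod \<mu> = exp (real_of_ereal (pressure A (\<lambda>\<rho>. x * f \<rho>))) \<and>
               is_eigenvalue_on (holder_space A \<alpha>) A (transfer_op A f (Complex x y)) \<mu>
             \<longrightarrow> alg_mult_one (holder_space A \<alpha>) A (transfer_op A f (Complex x y)) \<mu>)"
proof -
  obtain C where "C \<ge> 0" and "\<And>n \<rho> \<rho>'. n \<ge> 1 \<Longrightarrow> \<rho> \<in> admissible_seqs A \<Longrightarrow>
      \<rho>' \<in> admissible_seqs A \<Longrightarrow> (\<forall>i<n. \<rho> i = \<rho>' i) \<Longrightarrow>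
      norm (f \<rho> - f \<rho>') \<le> C * exp (- (\<alpha> * (real n - 1)))"
    using holder_typeD[OF hold] by metis
  then interpret holder_potential A f \<alpha> x C
    using irr alpha_pos x_Gamma by unfold_locales (auto simp: Gamma_set_def)
  have "exp (real_of_ereal (pressure A (\<lambda>\<rho>. x * f \<rho>))) = lam"
    by (simp add: pressure_xf_eq lam_def)
  then show ?thesis
    using finite_peripheral_eigenvalues[of "Complex x y"] peripheral_alg_mult_one[of "Complex x y"] by simp
qed

end
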